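(* Let $X$ be a Fréchet space. A multifunction $\Gamma:[0,1]\to ck(X)$ is integrable if and only if it is p-integrable. In that case, for every Lebesgue measurable $E\subseteq[0,1]$ the two integrals of $\Gamma$ over $E$ coincide.
   Context: $X$ is a Fréchet space whose topology is generated by an increasing sufficient sequence of seminorms $(p_i)_{i\in\mathbb N}$. $ck(X)$ is the family of nonempty compact convex subsets of $X$. For sets $A,B$, $H_i(A,B)=\max(e_i(A,B),e_i(B,A))$, $e_i(A,B)=\sup_{a\in A}\inf_{b\in B}p_i(a-b)$. $\mu$ is Lebesgue measure, $\mathcal L$ the Lebesgue measurable sets of $[0,1]$. Minkowski addition $A\oplus B=\overline{\{a+b\}}$. A simple multifunction is $\Gamma=\sum_{j=1}^p\chi_{A_j}C_j$ ($A_j\in\mathcal L$ pairwise disjoint, $C_j$ closed bounded convex) and $\int_E\Gamma\,dt:=\sum_j\mu(A_j\cap E)C_j$. Totally measurable: there are simple $\Gamma_n$ with $H_i(\Gamma_n(t),\Gamma(t))\to0$ a.e. for every $i$. Measurable by seminorm: for each $i$ there are simple $\Gamma_n^i$ with $H_i(\Gamma_n^i(t),\Gamma(t))\to0$ a.e. Integrable: $\Gamma$ is totally measurable and there exist simple $\Gamma_n:[0,1]\to ck(X)$ with $H_i(\Gamma_n(t),\Gamma(t))\to0$ a.e. for each $i$ and $\lim_{n,m\to\infty}\int_0^1H_i(\Gamma_n(t),\Gamma_m(t))dt=0$ for each $i$; then for each $E\in\mathcal L$ there is $x_E\in ck(X)$ with $\lim_nH_i(\int_E\Gamma_n dt,x_E)=0$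 for each $i$, and $x_E=\int_E\Gamma\,dt$. p-integrable: $\Gamma$ is measurable by seminorm and for every $i$ there are simple $\Gamma_n^i:[0,1]\to ck(X)$ such that $H_i(\Gamma_n^i(\cdot),\Gamma(\cdot))\in L^1([0,1])$, $H_i(\Gamma^i_n(\cdot),\Gamma(\cdot))\to0$ in measure, $\lim_n\int_EH_i(\Gamma_n^i(t),\Gamma(t))dt=0$ for each $E\in\mathcal L$, and there is a unique $x_E\in ck(X)$ with $\lim_nH_i(\int_E\Gamma_n^i dt,x_E)=0$; $x_E$ is the integral $\int_E\Gamma\,dt$. *)

theory Defs
  imports "HOL-Analysis.Analysis"
begin

definition is_seminorm :: "('a::real_vector \<Rightarrow> real) \<Rightarrow> bool" where
  "is_seminorm q \<longleftrightarrow> (\<forall>x. 0 \<le> q x) \<and> (\<forall>c x. q (c *\<^sub>R x) = \<bar>c\<bar> * q x)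
     \<and> (\<forall>x y. q (x + y) \<le> q x + q y)"

definition sn_conv :: "(nat \<Rightarrow> 'a::real_vector \<Rightarrow> real) \<Rightarrow> (nat \<Rightarrow> 'a) \<Rightarrow> 'a \<Rightarrow> bool" where
  "sn_conv p f x \<longleftrightarrow> (\<forall>i. (\<lambda>n. p i (f n - x)) \<longlonglongrightarrow> 0)"

definition sn_cauchy :: "(nat \<Rightarrow> 'a::real_vector \<Rightarrow> real) \<Rightarrow> (nat \<Rightarrow> 'a) \<Rightarrow> bool" where
  "sn_cauchy p f \<longleftrightarrow> (\<forall>i. \<forall>e>0. \<exists>N. \<forall>m\<ge>N. \<forall>n\<ge>N. p i (f m - f n) < e)"

definition frechet_seminorms :: "(nat \<Rightarrow> 'a::real_vector \<Rightarrow> real) \<Rightarrow> bool" where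
  "frechet_seminorms p \<longleftrightarrow> (\<forall>i. is_seminorm (p i))
     \<and> (\<forall>i x. p i x \<le> p (Suc i) x)
     \<and> (\<forall>x. (\<forall>i. p i x = 0) \<longrightarrow> x = 0)
     \<and> (\<forall>f. sn_cauchy p f \<longrightarrow> (\<exists>x. sn_conv p f x))"

text \<open>The topology is metrizable, so closure/compactness can be expressed by sequences.\<close>
definition sn_closure :: "(nat \<Rightarrow> 'a::real_vector \<Rightarrow> real) \<Rightarrow> 'a set \<Rightarrow> 'a set" where
  "sn_closure p S = {x. \<exists>f. (\<forall>n. f n \<in> S) \<and> sn_conv p f x}"

definition sn_closed :: "(nat \<Rightarrow> 'a::real_vector \<Rightarrow> real) \<Rightarrow> 'a set \<Rightarrow> bool" where
  "sn_closed p C \<longleftrightarrow> sn_closure p C \<subseteq> C"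

definition sn_bounded :: "(nat \<Rightarrow> 'a::real_vector \<Rightarrow> real) \<Rightarrow> 'a set \<Rightarrow> bool" where
  "sn_bounded p C \<longleftrightarrow> (\<forall>i. \<exists>M. \<forall>x\<in>C. p i x \<le> M)"

definition sn_compact :: "(nat \<Rightarrow> 'a::real_vector \<Rightarrow> real) \<Rightarrow> 'a set \<Rightarrow> bool" where
  "sn_compact p C \<longleftrightarrow> (\<forall>f. (\<forall>n. f n \<in> C) \<longrightarrow>
      (\<exists>(r::nat \<Rightarrow> nat) x. strict_mono r \<and> x \<in> C \<and> sn_conv p (f \<circ> r) x))"

definition ck :: "(nat \<Rightarrow> 'a::real_vector \<Rightarrow> real) \<Rightarrow> 'a set set" where
  "ck p = {C. C \<noteq> {} \<and> convex C \<and> sn_compact p C}"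

definition cbc :: "(nat \<Rightarrow> 'a::real_vector \<Rightarrow> real) \<Rightarrow> 'a set set" where
  "cbc p = {C. C \<noteq> {} \<and> convex C \<and> sn_closed p C \<and> sn_bounded p C}"

definition excess :: "(nat \<Rightarrow> 'a::real_vector \<Rightarrow> real) \<Rightarrow> nat \<Rightarrow> 'a set \<Rightarrow> 'a set \<Rightarrow> real" where
  "excess p i A B = (SUP a\<in>A. INF b\<in>B. p i (a - b))"

definition hausd :: "(nat \<Rightarrow> 'a::real_vector \<Rightarrow> real) \<Rightarrow> nat \<Rightarrow> 'a set \<Rightarrow> 'a set \<Rightarrow> real" where
  "hausd p i A B = max (excess p i A B) (excess p i B A)"

definition msum :: "(nat \<Rightarrow> 'a::real_vector \<Rightarrow> real) \<Rightarrow> 'a set \<Rightarrow> 'a set \<Rightarrow> 'a set" where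
  "msum p A B = sn_closure p {a + b | a b. a \<in> A \<and> b \<in> B}"

definition sscale :: "real \<Rightarrow> 'a::real_vector set \<Rightarrow> 'a set" where
  "sscale c A = (\<lambda>x. c *\<^sub>R x) ` A"

definition simple_rep :: "(nat \<Rightarrow> 'a::real_vector \<Rightarrow> real) \<Rightarrow> (real set \<times> 'a set) list \<Rightarrow> bool" where
  "simple_rep p L \<longleftrightarrow>
     (\<forall>j<length L. fst (L ! j) \<in> sets (lebesgue_on {0..1}) \<and> snd (L ! j) \<in> cbc p)
     \<and> (\<forall>j<length L. \<forall>k<length L. j \<noteq> k \<longrightarrow> fst (L ! j) \<inter> fst (L ! k) = {})"

definition simple_val :: "(nat \<Rightarrow> 'a::real_vector \<Rightarrow> real) \<Rightarrow> (real set \<times> 'a set) list \<Rightarrow> real \<Rightarrow> 'a set" where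
  "simple_val p L t = foldr (\<lambda>(A, C) S. msum p (sscale (indicator A t) C) S) L {0}"

definition simple_int :: "(nat \<Rightarrow> 'a::real_vector \<Rightarrow> real) \<Rightarrow> (real set \<times> 'a set) list \<Rightarrow> real set \<Rightarrow> 'a set" where
  "simple_int p L E = foldr (\<lambda>(A, C) S. msum p (sscale (measure lebesgue (A \<inter> E)) C) S) L {0}"

definition totally_measurable :: "(nat \<Rightarrow> 'a::real_vector \<Rightarrow> real) \<Rightarrow> (real \<Rightarrow> 'a set) \<Rightarrow> bool" where
  "totally_measurable p \<Gamma> \<longleftrightarrow> (\<exists>L. (\<forall>n. simple_rep p (L n)) \<and>
     (\<forall>i. AE t in lebesgue_on {0..1}. (\<lambda>n. hausd p i (simple_val p (L n) t) (\<Gamma> t)) \<longlonglongrightarrow> 0))"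

definition measurable_by_seminorm :: "(nat \<Rightarrow> 'a::real_vector \<Rightarrow> real) \<Rightarrow> (real \<Rightarrow> 'a set) \<Rightarrow> bool" where
  "measurable_by_seminorm p \<Gamma> \<longleftrightarrow> (\<forall>i. \<exists>L. (\<forall>n. simple_rep p (L n)) \<and>
     (AE t in lebesgue_on {0..1}. (\<lambda>n. hausd p i (simple_val p (L n) t) (\<Gamma> t)) \<longlonglongrightarrow> 0))"

definition int_seq :: "(nat \<Rightarrow> 'a::real_vector \<Rightarrow> real) \<Rightarrow> (real \<Rightarrow> 'a set) \<Rightarrow> (nat \<Rightarrow> (real set \<times> 'a set) list) \<Rightarrow> bool" where
  "int_seq p \<Gamma> L \<longleftrightarrow> totally_measurable p \<Gamma>
     \<and> (\<forall>n. simple_rep p (L n) \<and> (\<forall>t\<in>{0..1}. simple_val p (L n) t \<in> ck p))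
     \<and> (\<forall>i. AE t in lebesgue_on {0..1}. (\<lambda>n. hausd p i (simple_val p (L n) t) (\<Gamma> t)) \<longlonglongrightarrow> 0)
     \<and> (\<forall>i. \<forall>e>0. \<exists>N. \<forall>m\<ge>N. \<forall>n\<ge>N.
           integral\<^sup>L (lebesgue_on {0..1}) (\<lambda>t. hausd p i (simple_val p (L n) t) (simple_val p (L m) t)) < e)"

definition integrable_mf :: "(nat \<Rightarrow> 'a::real_vector \<Rightarrow> real) \<Rightarrow> (real \<Rightarrow> 'a set) \<Rightarrow> bool" where
  "integrable_mf p \<Gamma> \<longleftrightarrow> (\<exists>L. int_seq p \<Gamma> L \<and>
     (\<forall>E\<in>sets (lebesgue_on {0..1}). \<exists>x\<in>ck p.
        \<forall>i. (\<lambda>n. hausd p i (simple_int p (L n) E) x) \<longlonglongrightarrow> 0))"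

definition integral_mf_is :: "(nat \<Rightarrow> 'a::real_vector \<Rightarrow> real) \<Rightarrow> (real \<Rightarrow> 'a set)
    \<Rightarrow> (nat \<Rightarrow> (real set \<times> 'a set) list) \<Rightarrow> (real set \<Rightarrow> 'a set) \<Rightarrow> bool" where
  "integral_mf_is p \<Gamma> L I \<longleftrightarrow> int_seq p \<Gamma> L \<and>
     (\<forall>E\<in>sets (lebesgue_on {0..1}). I E \<in> ck p \<and>
        (\<forall>i. (\<lambda>n. hausd p i (simple_int p (L n) E) (I E)) \<longlonglongrightarrow> 0))"

definition p_int_seq :: "(nat \<Rightarrow> 'a::real_vector \<Rightarrow> real) \<Rightarrow> (real \<Rightarrow> 'a set) \<Rightarrow> (nat \<Rightarrow> nat \<Rightarrow> (real set \<times> 'a set) list) \<Rightarrow> bool" where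
  "p_int_seq p \<Gamma> Ls \<longleftrightarrow> measurable_by_seminorm p \<Gamma> \<and>
     (\<forall>i. (\<forall>n. simple_rep p (Ls i n) \<and> (\<forall>t\<in>{0..1}. simple_val p (Ls i n) t \<in> ck p))
       \<and> (\<forall>n. integrable (lebesgue_on {0..1}) (\<lambda>t. hausd p i (simple_val p (Ls i n) t) (\<Gamma> t)))
       \<and> (\<forall>e>0. (\<lambda>n. measure lebesgue {t\<in>{0..1}. e \<le> hausd p i (simple_val p (Ls i n) t) (\<Gamma> t)}) \<longlonglongrightarrow> 0)
       \<and> (\<forall>E\<in>sets (lebesgue_on {0..1}).
            (\<lambda>n. (LINT t:E|lebesgue. hausd p i (simple_val p (Ls i n) t) (\<Gamma> t))) \<longlonglongrightarrow> 0))"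

definition p_integrable_mf :: "(nat \<Rightarrow> 'a::real_vector \<Rightarrow> real) \<Rightarrow> (real \<Rightarrow> 'a set) \<Rightarrow> bool" where
  "p_integrable_mf p \<Gamma> \<longleftrightarrow> (\<exists>Ls. p_int_seq p \<Gamma> Ls \<and>
     (\<forall>E\<in>sets (lebesgue_on {0..1}). \<exists>!x. x \<in> ck p \<and>
        (\<forall>i. (\<lambda>n. hausd p i (simple_int p (Ls i n) E) x) \<longlonglongrightarrow> 0)))"

definition p_integral_mf_is :: "(nat \<Rightarrow> 'a::real_vector \<Rightarrow> real) \<Rightarrow> (real \<Rightarrow> 'a set)
    \<Rightarrow> (nat \<Rightarrow> nat \<Rightarrow> (real set \<times> 'a set) list) \<Rightarrow> (real set \<Rightarrow> 'a set) \<Rightarrow> bool" where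
  "p_integral_mf_is p \<Gamma> Ls J \<longleftrightarrow> p_int_seq p \<Gamma> Ls \<and>
     (\<forall>E\<in>sets (lebesgue_on {0..1}). J E \<in> ck p \<and>
        (\<forall>i. (\<lambda>n. hausd p i (simple_int p (Ls i n) E) (J E)) \<longlonglongrightarrow> 0))"

end

theory Submission
  imports Defs
begin

text \<open>
  For simple multifunctions the Hausdorff distance (for the seminorm \<open>p i\<close>) between the integrals
  over \<open>E\<close> is bounded by the integral over \<open>E\<close> of the pointwise Hausdorff distance: refine both
  partitions to a common one and split the values using their convexity.

  If \<open>\<Gamma>\<close> is integrable, its defining sequence is Cauchy in L1 and converges almost everywhere,
  so by Fatou's lemma it converges to \<open>\<Gamma>\<close> in L1 for every seminorm; the same sequence then
  witnesses p-integrability for every \<open>i\<close>. Conversely, if \<open>\<Gamma>\<close> is p-integrable, choose from the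
  \<open>k\<close>-th sequence a member \<open>G k\<close> with L1 error less than \<open>2^-k\<close> for \<open>p k\<close>. Since the seminorms
  increase, this bounds the error of \<open>G k\<close> for every \<open>p i\<close> with \<open>i \<le> k\<close>, so \<open>G\<close> converges
  almost everywhere (the errors are summable) and in L1, and by the bound for simple
  multifunctions its integrals converge to the p-integral. The same bound shows that the
  integrals of a defining sequence also converge to the p-integral, so both integrals coincide.
\<close>

section \<open>Hausdorff distance with respect to a seminorm\<close>

text \<open>\<open>hausd p i\<close> depends on the whole family \<open>p\<close>; the same distance for a single seminorm \<open>q\<close>
  lets its metric properties be proved from \<open>is_seminorm q\<close> alone.\<close>

definition sn_infdist :: "('a::real_vector \<Rightarrow> real) \<Rightarrow> 'a \<Rightarrow> 'a set \<Rightarrow> real" where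
  "sn_infdist q a B = (INF b\<in>B. q (a - b))"

definition sn_excess :: "('a::real_vector \<Rightarrow> real) \<Rightarrow> 'a set \<Rightarrow> 'a set \<Rightarrow> real" where
  "sn_excess q A B = (SUP a\<in>A. sn_infdist q a B)"

definition sn_hausdist :: "('a::real_vector \<Rightarrow> real) \<Rightarrow> 'a set \<Rightarrow> 'a set \<Rightarrow> real" where
  "sn_hausdist q A B = max (sn_excess q A B) (sn_excess q B A)"

lemma hausd_eq_sn_hausdist: "hausd p i = sn_hausdist (p i)"
  by (simp add: fun_eq_iff hausd_def sn_hausdist_def excess_def sn_excess_def sn_infdist_def)

definition ne_bounded :: "('a::real_vector \<Rightarrow> real) \<Rightarrow> 'a set \<Rightarrow> bool" where
  "ne_bounded q A \<longleftrightarrow> A \<noteq> {} \<and> (\<exists>M. \<forall>x\<in>A. q x \<le> M)"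

lemma ne_boundedD: "ne_bounded q A \<Longrightarrow> A \<noteq> {}"
  by (simp add: ne_bounded_def)

locale seminorm =
  fixes q :: "'a::real_vector \<Rightarrow> real"
  assumes seminorm: "is_seminorm q"
begin

lemma nonneg: "0 \<le> q x"
  using seminorm by (simp add: is_seminorm_def)

lemma scale: "q (c *\<^sub>R x) = \<bar>c\<bar> * q x"
  using seminorm by (simp add: is_seminorm_def)

lemma triangle: "q (x + y) \<le> q x + q y"
  using seminorm by (simp add: is_seminorm_def)

lemma zero [simp]: "q 0 = 0"
  using scale[of 0 0] by simp

lemma minus: "q (- x) = q x"
  using scale[of "-1" x] by simp

lemma diff_commute: "q (x - y) = q (y - x)"
  using minus[of "x - y"] by simp

lemma diff_triangle: "q (x - z) \<le> q (x - y) + q (y - z)"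
  using triangle[of "x - y" "y - z"] by simp

lemma diff_le: "q (x - y) \<le> q x + q y"
  using triangle[of x "- y"] minus[of y] by simp

lemma le_diff: "q x \<le> q y + q (x - y)"
  using triangle[of y "x - y"] by simp

lemma ne_bounded_plus: "ne_bounded q A \<Longrightarrow> ne_bounded q B \<Longrightarrow> ne_bounded q (A + B)"
  unfolding ne_bounded_def
  by (fastforce intro: add_mono order_trans[OF triangle] elim!: set_plus_elim)

lemma ne_bounded_sscale: "ne_bounded q A \<Longrightarrow> ne_bounded q (sscale c A)"
  unfolding ne_bounded_def sscale_def
  by (fastforce simp: scale intro: mult_left_mono)

lemma ne_bounded_zero: "ne_bounded q {0}"
  by (auto simp: ne_bounded_def)

lemma infdist_le: "b \<in> B \<Longrightarrow> sn_infdist q a B \<le> q (a - b)"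
  unfolding sn_infdist_def by (rule cINF_lower) (auto intro: bdd_belowI[where m=0] nonneg)

lemma infdist_greatest: "B \<noteq> {} \<Longrightarrow> (\<And>b. b \<in> B \<Longrightarrow> r \<le> q (a - b)) \<Longrightarrow> r \<le> sn_infdist q a B"
  unfolding sn_infdist_def by (rule cINF_greatest) auto

lemma infdist_approx:
  assumes "B \<noteq> {}" "e > 0" shows "\<exists>b\<in>B. q (a - b) < sn_infdist q a B + e"
proof (rule ccontr)
  assume "\<not> ?thesis"
  then have "sn_infdist q a B + e \<le> sn_infdist q a B"
    by (intro infdist_greatest) (use assms in auto)
  with assms show False by simp
qed

lemma infdist_le_excess:
  assumes "a \<in> A" "ne_bounded q A" "ne_bounded q B"
  shows "sn_infdist q a B \<le> sn_excess q A B"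
proof -
  obtain MA MB b where MA: "\<forall>x\<in>A. q x \<le> MA" and MB: "\<forall>x\<in>B. q x \<le> MB" and b: "b \<in> B"
    using assms(2,3) by (auto simp: ne_bounded_def)
  have "sn_infdist q a B \<le> MA + MB" if "a \<in> A" for a
    using infdist_le[OF b, of a] diff_le[of a b] MA MB b that by fastforce
  then have "bdd_above ((\<lambda>a. sn_infdist q a B) ` A)"
    by (intro bdd_aboveI[where M="MA + MB"]) auto
  then show ?thesis unfolding sn_excess_def by (rule cSUP_upper[OF assms(1)])
qed

lemma excess_approx:
  assumes "a \<in> A" "ne_bounded q A" "ne_bounded q B" "e > 0"
  shows "\<exists>b\<in>B. q (a - b) < sn_excess q A B + e"
proof -
  obtain b where "b \<in> B" "q (a - b) < sn_infdist q a B + e"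
    using infdist_approx[OF ne_boundedD[OF assms(3)] assms(4)] by blast
  then show ?thesis using infdist_le_excess[OF assms(1-3)] by (intro bexI[of _ b]) auto
qed

lemma excess_leI:
  assumes "A \<noteq> {}" "B \<noteq> {}"
    and "\<And>a e. a \<in> A \<Longrightarrow> e > 0 \<Longrightarrow> \<exists>b\<in>B. q (a - b) \<le> r + e"
  shows "sn_excess q A B \<le> r"
  unfolding sn_excess_def
proof (rule cSUP_least[OF assms(1)])
  fix a assume a: "a \<in> A"
  show "sn_infdist q a B \<le> r"
  proof (rule field_le_epsilon)
    fix e :: real assume "e > 0"
    then obtain b where "b \<in> B" "q (a - b) \<le> r + e" using assms(3)[OF a] by blast
    then show "sn_infdist q a B \<le> r + e" using infdist_le[of b B a] by linarith
  qed
qed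

lemma excess_triangle:
  assumes "ne_bounded q A" "ne_bounded q B" "ne_bounded q C"
  shows "sn_excess q A C \<le> sn_excess q A B + sn_excess q B C"
proof (rule excess_leI)
  show "A \<noteq> {}" "C \<noteq> {}" using assms by (auto dest: ne_boundedD)
  fix a e assume a: "a \<in> A" and e: "(e::real) > 0"
  obtain b where b: "b \<in> B" "q (a - b) < sn_excess q A B + e/2"
    using excess_approx[OF a assms(1,2), of "e/2"] e by auto
  obtain c where c: "c \<in> C" "q (b - c) < sn_excess q B C + e/2"
    using excess_approx[OF b(1) assms(2,3), of "e/2"] e by auto
  show "\<exists>c\<in>C. q (a - c) \<le> sn_excess q A B + sn_excess q B C + e"
    using diff_triangle[of a c b] b c by (intro bexI[OF _ c(1)]) linarith
qed

lemma hausdist_nonneg: "ne_bounded q A \<Longrightarrow> ne_bounded q B \<Longrightarrow> 0 \<le> sn_hausdist q A B"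
  unfolding sn_hausdist_def ne_bounded_def
  by (metis all_not_in_conv infdist_greatest infdist_le_excess max.coboundedI1 ne_bounded_def nonneg
      order_trans)

lemma hausdist_commute: "sn_hausdist q A B = sn_hausdist q B A"
  by (simp add: sn_hausdist_def max.commute)

lemma hausdist_self:
  assumes "A \<noteq> {}" shows "sn_hausdist q A A \<le> 0"
proof -
  have "sn_excess q A A \<le> 0"
  proof (rule excess_leI[OF assms assms])
    fix a e assume "a \<in> A" "(e::real) > 0"
    then show "\<exists>b\<in>A. q (a - b) \<le> 0 + e" by (intro bexI[of _ a]) auto
  qed
  then show ?thesis by (simp add: sn_hausdist_def)
qed

lemma hausdist_triangle:
  assumes "ne_bounded q A" "ne_bounded q B" "ne_bounded q C"
  shows "sn_hausdist q A C \<le> sn_hausdist q A B + sn_hausdist q B C"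
  using excess_triangle[OF assms] excess_triangle[OF assms(3,2,1)]
  unfolding sn_hausdist_def by auto

lemma hausdist_leI:
  assumes "A \<noteq> {}" "B \<noteq> {}"
    and "\<And>a e. a \<in> A \<Longrightarrow> e > 0 \<Longrightarrow> \<exists>b\<in>B. q (a - b) \<le> r + e"
    and "\<And>b e. b \<in> B \<Longrightarrow> e > 0 \<Longrightarrow> \<exists>a\<in>A. q (b - a) \<le> r + e"
  shows "sn_hausdist q A B \<le> r"
  unfolding sn_hausdist_def using excess_leI[OF assms(1,2,3)] excess_leI[OF assms(2,1,4)] by auto

lemma hausdist_approx:
  assumes "a \<in> A" "ne_bounded q A" "ne_bounded q B" "e > 0"
  shows "\<exists>b\<in>B. q (a - b) < sn_hausdist q A B + e"
  using excess_approx[OF assms] unfolding sn_hausdist_def by force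

lemma hausdist_approx':
  assumes "b \<in> B" "ne_bounded q A" "ne_bounded q B" "e > 0"
  shows "\<exists>a\<in>A. q (b - a) < sn_hausdist q A B + e"
  using excess_approx[OF assms(1,3,2,4)] unfolding sn_hausdist_def by force

lemma hausdist_plus_le:
  assumes "ne_bounded q A" "ne_bounded q B" "ne_bounded q C" "ne_bounded q D"
  shows "sn_hausdist q (A + B) (C + D) \<le> sn_hausdist q A C + sn_hausdist q B D"
proof -
  have *: "\<exists>y\<in>Y + W. q (x - y) \<le> sn_hausdist q X Y + sn_hausdist q Z W + e"
    if x: "x \<in> X + Z" and e: "e > 0"
      and bd: "ne_bounded q X" "ne_bounded q Y" "ne_bounded q Z" "ne_bounded q W"
    for X Y Z W x e
  proof -
    obtain a b where ab: "x = a + b" "a \<in> X" "b \<in> Z" using x by (rule set_plus_elim)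
    obtain c where c: "c \<in> Y" "q (a - c) < sn_hausdist q X Y + e/2"
      using hausdist_approx[OF ab(2) bd(1,2), of "e/2"] e by auto
    obtain d where d: "d \<in> W" "q (b - d) < sn_hausdist q Z W + e/2"
      using hausdist_approx[OF ab(3) bd(3,4), of "e/2"] e by auto
    have "q (x - (c + d)) \<le> q (a - c) + q (b - d)"
      using triangle[of "a - c" "b - d"] ab by (simp add: algebra_simps)
    then show ?thesis using c d by (intro bexI[of _ "c + d"]) auto
  qed
  show ?thesis
  proof (rule hausdist_leI)
    show "A + B \<noteq> {}" "C + D \<noteq> {}"
      using assms by (auto dest!: ne_boundedD simp: set_plus_def)
  next
    fix x e assume "x \<in> A + B" "(e::real) > 0"
    then show "\<exists>y\<in>C + D. q (x - y) \<le> sn_hausdist q A C + sn_hausdist q B D + e"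
      using * assms by blast
  next
    fix x e assume "x \<in> C + D" "(e::real) > 0"
    then show "\<exists>y\<in>A + B. q (x - y) \<le> sn_hausdist q A C + sn_hausdist q B D + e"
      using *[of x C D e A B] assms hausdist_commute by metis
  qed
qed

lemma hausdist_sscale_le:
  assumes "ne_bounded q A" "ne_bounded q B" "c \<ge> 0"
  shows "sn_hausdist q (sscale c A) (sscale c B) \<le> c * sn_hausdist q A B"
proof -
  have *: "\<exists>y\<in>sscale c Y. q (x - y) \<le> c * sn_hausdist q X Y + e"
    if x: "x \<in> sscale c X" and e: "e > 0" and bd: "ne_bounded q X" "ne_bounded q Y"
    for X Y x e
  proof -
    obtain a where a: "a \<in> X" "x = c *\<^sub>R a" using x by (auto simp: sscale_def)
    obtain b where b: "b \<in> Y" "q (a - b) < sn_hausdist q X Y + e / (c + 1)"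
      using hausdist_approx[OF a(1) bd, of "e / (c + 1)"] e assms(3) by auto
    have "q (x - c *\<^sub>R b) = c * q (a - b)"
      using scale[of c "a - b"] a assms(3) by (simp add: algebra_simps)
    also have "\<dots> \<le> c * (sn_hausdist q X Y + e / (c + 1))"
      using b assms(3) by (intro mult_left_mono) auto
    also have "\<dots> \<le> c * sn_hausdist q X Y + e"
      using assms(3) e by (simp add: field_simps)
    finally show ?thesis using b by (intro bexI[of _ "c *\<^sub>R b"]) (auto simp: sscale_def)
  qed
  show ?thesis
  proof (rule hausdist_leI)
    show "sscale c A \<noteq> {}" "sscale c B \<noteq> {}"
      using assms by (auto dest!: ne_boundedD simp: sscale_def)
  qed (use * assms hausdist_commute in metis)+
qed

lemma ne_bounded_sum:
  "finite I \<Longrightarrow> (\<And>j. j \<in> I \<Longrightarrow> ne_bounded q (X j)) \<Longrightarrow> ne_bounded q (sum X I)"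
  by (induction I rule: finite_induct) (auto intro: ne_bounded_plus ne_bounded_zero)

lemma hausdist_sum_le:
  assumes "finite I" "\<And>j. j \<in> I \<Longrightarrow> ne_bounded q (X j)" "\<And>j. j \<in> I \<Longrightarrow> ne_bounded q (Y j)"
  shows "sn_hausdist q (sum X I) (sum Y I) \<le> (\<Sum>j\<in>I. sn_hausdist q (X j) (Y j))"
  using assms
proof (induction I rule: finite_induct)
  case empty
  then show ?case using hausdist_self[of "{0}"] by simp
next
  case (insert x F)
  then have "sn_hausdist q (X x + sum X F) (Y x + sum Y F)
      \<le> sn_hausdist q (X x) (Y x) + sn_hausdist q (sum X F) (sum Y F)"
    by (intro hausdist_plus_le ne_bounded_sum) auto
  with insert show ?case by simp
qed

end

lemma sscale_0: "C \<noteq> {} \<Longrightarrow> sscale 0 C = {0}"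
  by (auto simp: sscale_def)

lemma sscale_add_convex:
  assumes "convex C" "C \<noteq> {}" "a \<ge> 0" "b \<ge> 0"
  shows "sscale (a + b) C = sscale a C + sscale b C"
proof (rule set_eqI, rule iffI)
  fix z assume "z \<in> sscale (a + b) C"
  then obtain x where x: "x \<in> C" "z = (a + b) *\<^sub>R x" by (auto simp: sscale_def)
  then have "z = a *\<^sub>R x + b *\<^sub>R x" by (simp add: scaleR_add_left)
  then show "z \<in> sscale a C + sscale b C" using x(1) by (auto simp: sscale_def intro!: set_plus_intro)
next
  fix z assume "z \<in> sscale a C + sscale b C"
  then obtain x y where xy: "x \<in> C" "y \<in> C" "z = a *\<^sub>R x + b *\<^sub>R y"
    by (auto simp: sscale_def elim!: set_plus_elim)
  show "z \<in> sscale (a + b) C"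
  proof (cases "a + b = 0")
    case True
    then have "a = 0" "b = 0" using assms by auto
    then show ?thesis using xy by (auto simp: sscale_def intro!: image_eqI[of _ _ x])
  next
    case False
    then have pos: "a + b > 0" using assms by auto
    define w where "w = (a / (a + b)) *\<^sub>R x + (b / (a + b)) *\<^sub>R y"
    have "w \<in> C" unfolding w_def
      by (rule convexD[OF assms(1) xy(1,2)]) (use assms pos in \<open>auto simp: add_divide_distrib[symmetric]\<close>)
    moreover have "(a + b) *\<^sub>R w = z"
      using pos by (simp add: w_def xy(3) scaleR_add_right)
    ultimately show ?thesis by (auto simp: sscale_def)
  qed
qed

lemma sscale_sum_convex:
  assumes "finite K" "convex C" "C \<noteq> {}" "\<And>k. k \<in> K \<Longrightarrow> w k \<ge> 0"
  shows "sscale (\<Sum>k\<in>K. w k) C = (\<Sum>k\<in>K. sscale (w k) C)"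
  using assms(1,4)
proof (induction K rule: finite_induct)
  case empty
  then show ?case using assms(3) by (auto simp: sscale_def)
next
  case (insert x F)
  then show ?case by (simp add: sscale_add_convex[OF assms(2,3)] sum_nonneg)
qed

section \<open>Frechet spaces\<close>

locale frechet =
  fixes p :: "nat \<Rightarrow> 'a::real_vector \<Rightarrow> real"
  assumes frechet: "frechet_seminorms p"

sublocale frechet \<subseteq> seminorm "p i" for i
  using frechet by unfold_locales (simp add: frechet_seminorms_def)

context frechet
begin

lemma seminorm_mono: "i \<le> j \<Longrightarrow> p i x \<le> p j x"
  using frechet lift_Suc_mono_le[of "\<lambda>i. p i x"] by (simp add: frechet_seminorms_def)

lemma seminorms_separating: "(\<And>i. p i x = 0) \<Longrightarrow> x = 0"
  using frechet by (simp add: frechet_seminorms_def)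

lemma sn_conv_unique:
  assumes "sn_conv p f x" "sn_conv p f y" shows "x = y"
proof -
  have "p i (x - y) \<le> 0" for i
  proof (rule LIMSEQ_le_const)
    show "(\<lambda>n. p i (f n - x) + p i (f n - y)) \<longlonglongrightarrow> 0"
      using assms tendsto_add[of "\<lambda>n. p i (f n - x)" 0 _ "\<lambda>n. p i (f n - y)" 0]
      by (auto simp: sn_conv_def)
    show "\<exists>N. \<forall>n\<ge>N. p i (x - y) \<le> p i (f n - x) + p i (f n - y)"
      using diff_triangle[of i x y] diff_commute[of i x] by (metis order.refl)
  qed
  then show ?thesis
    using seminorms_separating[of "x - y"] nonneg by (simp add: order_antisym)
qed

lemma sn_conv_const: "sn_conv p (\<lambda>n. x) x"
  by (simp add: sn_conv_def)

lemma sn_conv_subseq: "sn_conv p f x \<Longrightarrow> strict_mono r \<Longrightarrow> sn_conv p (f \<circ> r) x"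
  unfolding sn_conv_def using LIMSEQ_subseq_LIMSEQ by (fastforce simp: o_def)

lemma subset_sn_closure: "A \<subseteq> sn_closure p A"
  unfolding sn_closure_def by (auto intro!: exI[of _ "\<lambda>n. _"] sn_conv_const)

lemma sn_closure_closed: "sn_closed p C \<Longrightarrow> sn_closure p C = C"
  using subset_sn_closure[of C] by (auto simp: sn_closed_def)

lemma sn_closure_zero: "sn_closure p {0} = {0}"
  using sn_conv_unique[OF _ sn_conv_const] subset_sn_closure[of "{0}"]
  by (auto simp: sn_closure_def fun_eq_iff[symmetric] cong: sn_conv_def)

lemma ne_bounded_sn_closure:
  assumes "ne_bounded (p i) A" shows "ne_bounded (p i) (sn_closure p A)"
proof -
  obtain M where M: "\<forall>x\<in>A. p i x \<le> M" using assms by (auto simp: ne_bounded_def)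
  have "p i x \<le> M" if x: "x \<in> sn_closure p A" for x
  proof -
    obtain f where f: "\<forall>n. f n \<in> A" "sn_conv p f x" using x by (auto simp: sn_closure_def)
    have le: "p i x \<le> M + p i (f n - x)" for n
    proof -
      have "p i (f n) \<le> M" using M f(1) by blast
      then show ?thesis using le_diff[of i x "f n"] diff_commute[of i x "f n"] by linarith
    qed
    have "(\<lambda>n. M + p i (f n - x)) \<longlonglongrightarrow> M + 0"
      using f(2) by (intro tendsto_add tendsto_const) (simp add: sn_conv_def)
    then have "p i x \<le> M + 0" by (rule LIMSEQ_le_const) (use le in blast)
    then show ?thesis by simp
  qed
  then show ?thesis
    using assms subset_sn_closure[of A] by (auto simp: ne_bounded_def)
qed

lemma hausdist_sn_closure:
  assumes "ne_bounded (p i) A" shows "sn_hausdist (p i) (sn_closure p A) A \<le> 0"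
proof (rule hausdist_leI)
  show "sn_closure p A \<noteq> {}" "A \<noteq> {}"
    using assms subset_sn_closure[of A] by (auto simp: ne_bounded_def)
next
  fix x e assume "x \<in> sn_closure p A" "(e::real) > 0"
  then obtain f where f: "\<forall>n. f n \<in> A" and "(\<lambda>n. p i (f n - x)) \<longlonglongrightarrow> 0"
    by (auto simp: sn_closure_def sn_conv_def)
  then obtain N where "\<forall>n\<ge>N. norm (p i (f n - x) - 0) < e" using \<open>e > 0\<close> LIMSEQ_D by blast
  then have "p i (f N - x) < e" by auto
  then show "\<exists>a\<in>A. p i (x - a) \<le> 0 + e"
    using f diff_commute[of i x] by (intro bexI[of _ "f N"]) auto
next
  fix a e assume "a \<in> A" "(e::real) > 0"
  then show "\<exists>x\<in>sn_closure p A. p i (a - x) \<le> 0 + e"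
    using subset_sn_closure[of A] by (intro bexI[of _ a]) auto
qed

lemma hausdist_mono:
  assumes "ne_bounded (p j) A" "ne_bounded (p j) B" "i \<le> j"
  shows "sn_hausdist (p i) A B \<le> sn_hausdist (p j) A B"
proof (rule hausdist_leI)
  show "A \<noteq> {}" "B \<noteq> {}" using assms by (auto dest: ne_boundedD)
next
  fix a e assume "a \<in> A" "(e::real) > 0"
  then obtain b where "b \<in> B" "p j (a - b) < sn_hausdist (p j) A B + e"
    using hausdist_approx[OF _ assms(1,2)] by blast
  then show "\<exists>b\<in>B. p i (a - b) \<le> sn_hausdist (p j) A B + e"
    using seminorm_mono[OF assms(3), of "a - b"] by (intro bexI[of _ b]) auto
next
  fix b e assume "b \<in> B" "(e::real) > 0"
  then obtain a where "a \<in> A" "p j (b - a) < sn_hausdist (p j) A B + e"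
    using hausdist_approx'[OF _ assms(1,2)] by blast
  then show "\<exists>a\<in>A. p i (b - a) \<le> sn_hausdist (p j) A B + e"
    using seminorm_mono[OF assms(3), of "b - a"] by (intro bexI[of _ a]) auto
qed

lemma sn_compact_imp_sn_closed:
  assumes "sn_compact p C" shows "sn_closed p C"
  unfolding sn_closed_def
proof
  fix x assume "x \<in> sn_closure p C"
  then obtain f where f: "\<forall>n. f n \<in> C" "sn_conv p f x" by (auto simp: sn_closure_def)
  then obtain r y where r: "strict_mono r" and y: "y \<in> C" "sn_conv p (f \<circ> r) y"
    using assms[unfolded sn_compact_def, rule_format, of f] by blast
  have "x = y" by (rule sn_conv_unique[OF sn_conv_subseq[OF f(2) r] y(2)])
  then show "x \<in> C" using y(1) by simp
qed

lemma sn_compact_imp_sn_bounded: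
  assumes "sn_compact p C" shows "sn_bounded p C"
proof (rule ccontr)
  assume "\<not> sn_bounded p C"
  then have "\<exists>i. \<forall>M. \<exists>x\<in>C. M < p i x" by (simp add: sn_bounded_def not_le)
  then obtain i where "\<forall>M. \<exists>x\<in>C. M < p i x" by blast
  then obtain f where f: "\<forall>n. f n \<in> C \<and> real n < p i (f n)"
    using bchoice[of UNIV "\<lambda>n x. x \<in> C \<and> real n < p i x"] by fastforce
  then obtain r y where r: "strict_mono r" and "sn_conv p (f \<circ> r) y"
    using assms[unfolded sn_compact_def, rule_format, of f] by blast
  then have "(\<lambda>n. p i (f (r n) - y)) \<longlonglongrightarrow> 0" by (auto simp: sn_conv_def)
  then obtain N where "\<forall>n\<ge>N. norm (p i (f (r n) - y) - 0) < 1"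
    using LIMSEQ_D[OF _ zero_less_one] by blast
  then have N: "\<And>n. n \<ge> N \<Longrightarrow> p i (f (r n) - y) < 1" by auto
  obtain k :: nat where k: "p i y + 1 < real k" using reals_Archimedean2 by blast
  define n where "n = max N k"
  have "real (r n) > p i y + 1"
    using k seq_suble[OF r, of n] by (simp add: n_def)
  moreover have "p i (f (r n)) \<le> p i y + p i (f (r n) - y)" by (rule le_diff)
  moreover have "p i (f (r n) - y) < 1" using N[of n] by (simp add: n_def)
  ultimately show False using f[rule_format, of "r n"] by linarith
qed

lemma ck_subset_cbc: "ck p \<subseteq> cbc p"
  unfolding ck_def cbc_def using sn_compact_imp_sn_closed sn_compact_imp_sn_bounded by blast

lemma cbc_ne_bounded: "C \<in> cbc p \<Longrightarrow> ne_bounded (p i) C"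
  unfolding cbc_def sn_bounded_def ne_bounded_def by blast

lemma ck_ne_bounded: "C \<in> ck p \<Longrightarrow> ne_bounded (p i) C"
  using ck_subset_cbc cbc_ne_bounded by blast

lemma subset_if_hausdist_zero:
  assumes "\<And>i. ne_bounded (p i) A" "sn_closed p B" "\<And>i. ne_bounded (p i) B"
    and "\<And>i. sn_hausdist (p i) A B \<le> 0"
  shows "A \<subseteq> B"
proof
  fix x assume x: "x \<in> A"
  have "\<exists>y\<in>B. p i (x - y) < 1 / Suc i" for i
    using hausdist_approx[OF x assms(1)[of i] assms(3)[of i], of "1 / Suc i"] assms(4)[of i] by force
  then obtain g where g: "\<And>i. g i \<in> B" "\<And>i. p i (x - g i) < 1 / Suc i" by metis
  have "sn_conv p g x" unfolding sn_conv_def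
  proof
    fix j
    show "(\<lambda>n. p j (g n - x)) \<longlonglongrightarrow> 0"
    proof (rule tendsto_sandwich[where f="\<lambda>_. 0" and h="\<lambda>n. 1 / Suc n"])
      have "p j (g n - x) \<le> 1 / Suc n" if "j \<le> n" for n
        using seminorm_mono[OF that, of "g n - x"] g(2)[of n] diff_commute[of n x "g n"] by linarith
      then show "\<forall>\<^sub>F n in sequentially. p j (g n - x) \<le> 1 / Suc n"
        unfolding eventually_sequentially by blast
      show "(\<lambda>n. 1 / real (Suc n)) \<longlonglongrightarrow> 0"
        by (rule LIMSEQ_Suc[OF lim_const_over_n])
    qed (auto simp: nonneg)
  qed
  then show "x \<in> B"
    using g(1) assms(2) by (auto simp: sn_closure_def sn_closed_def)
qed

lemma cbc_eqI:
  assumes "A \<in> cbc p" "B \<in> cbc p" "\<And>i. sn_hausdist (p i) A B \<le> 0"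
  shows "A = B"
proof (rule subset_antisym)
  show "A \<subseteq> B"
    using assms by (intro subset_if_hausdist_zero) (auto simp: cbc_ne_bounded cbc_def)
  show "B \<subseteq> A"
    using assms hausdist_commute
    by (intro subset_if_hausdist_zero) (auto simp: cbc_ne_bounded cbc_def)
qed

end

section \<open>Integration\<close>

lemma (in finite_measure) integral_indicator_step_function:
  fixes f :: "'a \<Rightarrow> real"
  assumes "finite I" "disjoint_family_on A I" "\<And>j. j \<in> I \<Longrightarrow> A j \<in> sets M"
    and "space M \<subseteq> (\<Union>j\<in>I. A j)" "\<And>j t. j \<in> I \<Longrightarrow> t \<in> A j \<Longrightarrow> f t = c j"
    and "E \<in> sets M"
  shows "integrable M (\<lambda>t. indicator E t * f t)"
    "(\<integral>t. indicator E t * f t \<partial>M) = (\<Sum>j\<in>I. c j * measure M (A j \<inter> E))"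
proof -
  have step: "indicator E t * f t = (\<Sum>j\<in>I. c j * indicator (A j \<inter> E) t)" if t: "t \<in> space M" for t
  proof -
    obtain j0 where j0: "j0 \<in> I" "t \<in> A j0" using assms(4) t by blast
    have "(\<Sum>j\<in>I. c j * indicator (A j \<inter> E) t) = (\<Sum>j\<in>I. if j = j0 then c j0 * indicator E t else 0)"
      using assms(2) j0 by (intro sum.cong) (auto simp: indicator_def disjoint_family_on_def)
    also have "\<dots> = indicator E t * f t" using assms(1,5) j0 by simp
    finally show ?thesis by simp
  qed
  have sets: "A j \<inter> E \<in> sets M" if "j \<in> I" for j using assms(3,6) that by blast
  have int: "integrable M (\<lambda>t. \<Sum>j\<in>I. c j * indicator (A j \<inter> E) t)"
    using sets by (intro Bochner_Integration.integrable_sum integrable_mult_right) (auto simp: less_top[symmetric])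
  then show "integrable M (\<lambda>t. indicator E t * f t)"
    by (rule Bochner_Integration.integrable_cong[THEN iffD1, rotated 2]) (simp_all add: step)
  have "(\<integral>t. indicator E t * f t \<partial>M) = (\<integral>t. (\<Sum>j\<in>I. c j * indicator (A j \<inter> E) t) \<partial>M)"
    by (rule Bochner_Integration.integral_cong) (simp_all add: step)
  also have "\<dots> = (\<Sum>j\<in>I. c j * measure M (A j \<inter> E))"
    using sets sets.sets_into_space
    by (subst Bochner_Integration.integral_sum)
       (auto intro!: sum.cong simp: Int_absorb2 less_top[symmetric])
  finally show "(\<integral>t. indicator E t * f t \<partial>M) = (\<Sum>j\<in>I. c j * measure M (A j \<inter> E))" .
qed

lemma (in finite_measure) measure_partition:
  assumes "finite I" "disjoint_family_on A I" "\<And>j. j \<in> I \<Longrightarrow> A j \<in> sets M"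
    and "space M \<subseteq> (\<Union>j\<in>I. A j)" "E \<in> sets M"
  shows "measure M E = (\<Sum>j\<in>I. measure M (A j \<inter> E))"
  using integral_indicator_step_function(2)[OF assms(1-4), of "\<lambda>_. 1" "\<lambda>_. 1" E] assms(5)
    sets.sets_into_space by (simp add: Int_absorb2)

lemma integrable_AE_limit_bounded:
  fixes h :: "nat \<Rightarrow> 'a \<Rightarrow> real"
  assumes h: "\<And>m. integrable M (h m)" "\<And>m. AE t in M. 0 \<le> h m t"
    and lim: "AE t in M. (\<lambda>m. h m t) \<longlonglongrightarrow> F t" and F: "F \<in> borel_measurable M"
    and bound: "\<And>m. m \<ge> N \<Longrightarrow> integral\<^sup>L M (h m) \<le> B"
  shows "integrable M F" "integral\<^sup>L M F \<le> B"
proof -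
  have hm: "h m \<in> borel_measurable M" for m using h(1) by blast
  have "AE t in M. \<forall>m. 0 \<le> h m t" using h(2) by (simp add: AE_all_countable)
  then have F_nonneg: "AE t in M. 0 \<le> F t"
    using lim by eventually_elim (auto intro: LIMSEQ_le_const)
  have "(\<integral>\<^sup>+t. ennreal (F t) \<partial>M) = (\<integral>\<^sup>+t. liminf (\<lambda>m. ennreal (h m t)) \<partial>M)"
    using lim by (intro nn_integral_cong_AE) (auto elim!: eventually_mono
        intro!: lim_imp_Liminf[symmetric] tendsto_ennrealI)
  also have "\<dots> \<le> liminf (\<lambda>m. \<integral>\<^sup>+t. ennreal (h m t) \<partial>M)"
    using hm by (intro nn_integral_liminf) measurable
  also have "\<dots> \<le> limsup (\<lambda>m. \<integral>\<^sup>+t. ennreal (h m t) \<partial>M)"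
    by (rule Liminf_le_Limsup) simp
  also have "\<dots> \<le> ennreal B"
  proof (rule Limsup_bounded)
    have "(\<integral>\<^sup>+t. ennreal (h m t) \<partial>M) = ennreal (integral\<^sup>L M (h m))" for m
      using h by (rule nn_integral_eq_integral)
    then show "\<forall>\<^sub>F m in sequentially. (\<integral>\<^sup>+t. ennreal (h m t) \<partial>M) \<le> ennreal B"
      using bound by (auto simp: eventually_sequentially intro: ennreal_leI)
  qed
  finally have le: "(\<integral>\<^sup>+t. ennreal (F t) \<partial>M) \<le> ennreal B" .
  then show F_int: "integrable M F"
    using F F_nonneg by (intro integrableI_nonneg) (auto simp: top_unique less_top[symmetric])
  have "0 \<le> integral\<^sup>L M (h N)" using h(2) by (rule integral_nonneg_AE)
  then have "0 \<le> B" using bound[of N] by simp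
  have "integral\<^sup>L M F = enn2real (\<integral>\<^sup>+t. ennreal (F t) \<partial>M)"
    using F F_nonneg by (rule integral_eq_nn_integral)
  also have "\<dots> \<le> B" using le \<open>0 \<le> B\<close> by (simp add: enn2real_leI)
  finally show "integral\<^sup>L M F \<le> B" .
qed

lemma L1_tendsto_imp_tendsto_in_measure:
  fixes f :: "nat \<Rightarrow> 'a \<Rightarrow> real"
  assumes "\<And>n. integrable M (f n)" "\<And>n. AE t in M. 0 \<le> f n t"
    and "(\<lambda>n. integral\<^sup>L M (f n)) \<longlonglongrightarrow> 0" "e > 0"
  shows "(\<lambda>n. measure M {t\<in>space M. e \<le> f n t}) \<longlonglongrightarrow> 0"
proof (rule tendsto_sandwich[where f="\<lambda>_. 0"])
  show "\<forall>\<^sub>F n in sequentially. measure M {t\<in>space M. e \<le> f n t} \<le> integral\<^sup>L M (f n) / e"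
    by (intro always_eventually allI integral_Markov_inequality_measure[OF assms(1) sets.top assms(2,4)])
  show "(\<lambda>n. integral\<^sup>L M (f n) / e) \<longlonglongrightarrow> 0"
    using tendsto_divide_zero[OF assms(3)] by simp
qed auto

lemma AE_tendsto_zero_if_summable_integrals:
  fixes \<phi> :: "nat \<Rightarrow> 'a \<Rightarrow> real"
  assumes int: "\<And>k. integrable M (\<phi> k)" and nonneg: "\<And>k. AE t in M. 0 \<le> \<phi> k t"
    and summable: "summable (\<lambda>k. integral\<^sup>L M (\<phi> k))"
  shows "AE t in M. (\<lambda>k. \<phi> k t) \<longlonglongrightarrow> 0"
proof -
  have [measurable]: "\<phi> k \<in> borel_measurable M" for k using int by blast
  have "(\<integral>\<^sup>+t. (\<Sum>k. ennreal (\<phi> k t)) \<partial>M) = (\<Sum>k. \<integral>\<^sup>+t. ennreal (\<phi> k t) \<partial>M)"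
    by (rule nn_integral_suminf) measurable
  also have "\<dots> = (\<Sum>k. ennreal (integral\<^sup>L M (\<phi> k)))"
    using nn_integral_eq_integral[OF int nonneg] by simp
  also have "\<dots> = ennreal (\<Sum>k. integral\<^sup>L M (\<phi> k))"
    using summable nonneg by (intro suminf_ennreal2 integral_nonneg_AE) auto
  finally have "AE t in M. (\<Sum>k. ennreal (\<phi> k t)) \<noteq> \<infinity>"
    by (intro nn_integral_PInf_AE) auto
  moreover have "AE t in M. \<forall>k. 0 \<le> \<phi> k t" using nonneg by (simp add: AE_all_countable)
  ultimately show ?thesis
    by eventually_elim (auto intro: summable_LIMSEQ_zero summable_suminf_not_top)
qed

lemma integral_indicator_mult_le:
  fixes f :: "'a \<Rightarrow> real"
  assumes "E \<in> sets M" "integrable M f" "AE t in M. 0 \<le> f t"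
  shows "0 \<le> (\<integral>t. indicator E t * f t \<partial>M)" "(\<integral>t. indicator E t * f t \<partial>M) \<le> integral\<^sup>L M f"
proof -
  show "0 \<le> (\<integral>t. indicator E t * f t \<partial>M)"
    using assms(3) by (intro integral_nonneg_AE) (auto simp: indicator_def elim!: eventually_mono)
  have "integrable M (\<lambda>t. indicator E t * f t)"
    using integrable_real_mult_indicator[OF assms(1,2)] by (simp add: mult.commute)
  then show "(\<integral>t. indicator E t * f t \<partial>M) \<le> integral\<^sup>L M f"
    using assms(2,3) by (intro integral_mono_AE) (auto simp: indicator_def elim!: eventually_mono)
qed

abbreviation lebesgue_01 :: "real measure" where
  "lebesgue_01 \<equiv> lebesgue_on {0..1}"

interpretation lebesgue_01: finite_measure lebesgue_01
  using lmeasurable_cbox[of "0::real" 1] by (intro finite_measure_lebesgue_on) (simp add: cbox_interval)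

lemma sets_lebesgue_01: "X \<in> sets lebesgue_01 \<longleftrightarrow> X \<subseteq> {0..1} \<and> X \<in> sets lebesgue"
  by (subst sets_restrict_space_iff) auto

lemma measure_lebesgue_01: "X \<in> sets lebesgue_01 \<Longrightarrow> measure lebesgue_01 X = measure lebesgue X"
  by (rule measure_restrict_space) (auto simp: sets_lebesgue_01)

lemma set_integral_lebesgue_01:
  fixes f :: "real \<Rightarrow> real"
  assumes "E \<in> sets lebesgue_01"
  shows "(LINT t:E|lebesgue. f t) = (\<integral>t. indicator E t * f t \<partial>lebesgue_01)"
proof -
  have Omega: "{0..1::real} \<inter> space lebesgue \<in> sets lebesgue" by simp
  have "(\<integral>t. indicator E t * f t \<partial>lebesgue_01) = (\<integral>t. indicator {0..1} t *\<^sub>R (indicator E t * f t) \<partial>lebesgue)"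
    by (rule integral_restrict_space[OF Omega])
  also have "\<dots> = (\<integral>t. indicator E t *\<^sub>R f t \<partial>lebesgue)"
    using assms by (intro Bochner_Integration.integral_cong) (auto simp: sets_lebesgue_01 indicator_def)
  finally show ?thesis by (simp add: set_lebesgue_integral_def)
qed

lemma borel_measurable_lebesgue_01_AE_tendsto:
  fixes h :: "nat \<Rightarrow> real \<Rightarrow> real"
  assumes "\<And>m. h m \<in> borel_measurable lebesgue_01" "AE t in lebesgue_01. (\<lambda>m. h m t) \<longlonglongrightarrow> F t"
  shows "F \<in> borel_measurable lebesgue_01"
proof -
  have Omega: "{0..1::real} \<inter> space lebesgue \<in> sets lebesgue" by simp
  define G where "G t = lim (\<lambda>m. h m t)" for t
  have "G \<in> borel_measurable lebesgue_01"
    unfolding G_def using assms(1) by (rule borel_measurable_lim_metric)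
  then have "(\<lambda>t. indicator {0..1} t *\<^sub>R G t) \<in> borel_measurable lebesgue"
    using borel_measurable_restrict_space_iff[OF Omega] by blast
  moreover have "AE t in lebesgue. indicator {0..1} t *\<^sub>R G t = indicator {0..1} t *\<^sub>R F t"
    using AE_restrict_space_iff[OF Omega, THEN iffD1, OF assms(2)]
    by eventually_elim (auto simp: indicator_def limI G_def)
  ultimately have "(\<lambda>t. indicator {0..1} t *\<^sub>R F t) \<in> borel_measurable lebesgue"
    by (rule borel_measurable_AE)
  then show ?thesis using borel_measurable_restrict_space_iff[OF Omega] by blast
qed

section \<open>Simple multifunctions\<close>

lemma msum_eq_sn_closure: "msum p A B = sn_closure p (A + B)"
  unfolding msum_def set_plus_def by (rule arg_cong[where f="sn_closure p"]) auto

lemma simple_rep_Cons: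
  assumes "simple_rep p ((A, C) # L)"
  shows "simple_rep p L" "A \<in> sets lebesgue_01" "C \<in> cbc p"
    "\<And>j. j < length L \<Longrightarrow> A \<inter> fst (L ! j) = {}"
proof -
  note rep = assms[unfolded simple_rep_def]
  show "simple_rep p L"
    unfolding simple_rep_def
  proof (intro conjI allI impI)
    fix j k assume "j < length L" "k < length L" "j \<noteq> k"
    then show "fst (L ! j) \<inter> fst (L ! k) = {}" using rep[THEN conjunct2, rule_format, of "Suc j" "Suc k"] by simp
  qed (use rep[THEN conjunct1, rule_format, of "Suc _"] in auto)
  show "A \<in> sets lebesgue_01" "C \<in> cbc p" using rep[THEN conjunct1, rule_format, of 0] by auto
  show "A \<inter> fst (L ! j) = {}" if "j < length L" for j
    using that rep[THEN conjunct2, rule_format, of 0 "Suc j"] by simp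
qed

text \<open>A simple multifunction as a partition of [0,1] into the cells \<open>0..length L\<close>; the last cell is
  the part of [0,1] not covered by the listed sets, where the multifunction is \<open>{0}\<close>.\<close>

definition cell :: "(real set \<times> 'b) list \<Rightarrow> nat \<Rightarrow> real set" where
  "cell L j = (if j < length L then fst (L ! j) else {0..1} - (\<Union>k<length L. fst (L ! k)))"

definition cell_value :: "(real set \<times> 'a::real_vector set) list \<Rightarrow> nat \<Rightarrow> 'a set" where
  "cell_value L j = (if j < length L then snd (L ! j) else {0})"

text \<open>The Minkowski sum behind \<open>simple_int\<close>, without the closures taken by \<open>msum\<close>.\<close>
definition simple_int_sum :: "(real set \<times> 'a::real_vector set) list \<Rightarrow> real set \<Rightarrow> 'a set" where
  "simple_int_sum L E = (\<Sum>j<length L. sscale (measure lebesgue (fst (L ! j) \<inter> E)) (snd (L ! j)))"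

lemma simple_int_sum_cells:
  "simple_int_sum L E = (\<Sum>j\<le>length L. sscale (measure lebesgue (cell L j \<inter> E)) (cell_value L j))"
  unfolding simple_int_sum_def lessThan_Suc_atMost[symmetric]
  by (simp add: cell_def cell_value_def sscale_def)

lemma cell_sets:
  assumes "simple_rep p L" shows "cell L j \<in> sets lebesgue_01"
proof (cases "j < length L")
  case True
  then show ?thesis using assms by (simp add: cell_def simple_rep_def)
next
  case False
  have "(\<Union>k<length L. fst (L ! k)) \<in> sets lebesgue_01"
    using assms by (intro sets.finite_UN) (auto simp: simple_rep_def)
  then have "space lebesgue_01 - (\<Union>k<length L. fst (L ! k)) \<in> sets lebesgue_01"
    by blast
  then show ?thesis using False by (simp add: cell_def)
qed

lemma cell_disjoint:
  assumes "simple_rep p L" shows "disjoint_family_on (cell L) {..length L}"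
  unfolding disjoint_family_on_def
proof (intro ballI impI)
  fix j k assume "j \<in> {..length L}" "k \<in> {..length L}" "j \<noteq> k"
  then consider "j < length L" "k < length L" | "j = length L" "k < length L" | "j < length L" "k = length L"
    by fastforce
  then show "cell L j \<inter> cell L k = {}"
    using assms \<open>j \<noteq> k\<close> by cases (auto simp: cell_def simple_rep_def)
qed

lemma cells_cover: "{0..1} \<subseteq> (\<Union>j\<le>length L. cell L j)"
proof
  fix t :: real assume t: "t \<in> {0..1}"
  show "t \<in> (\<Union>j\<le>length L. cell L j)"
  proof (cases "\<exists>k<length L. t \<in> fst (L ! k)")
    case True
    then obtain k where "k < length L" "t \<in> fst (L ! k)" by blast
    then show ?thesis by (intro UN_I[of k]) (auto simp: cell_def)
  next
    case False
    then show ?thesis using t by (intro UN_I[of "length L"]) (auto simp: cell_def)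
  qed
qed

context frechet
begin

lemma zero_in_cbc: "{0} \<in> cbc p"
  unfolding cbc_def sn_closed_def sn_bounded_def by (auto simp: sn_closure_zero intro: exI[of _ 0])

lemma simple_val_outside:
  assumes "simple_rep p L" "\<forall>j<length L. t \<notin> fst (L ! j)"
  shows "simple_val p L t = {0}"
  using assms
proof (induction L)
  case Nil
  then show ?case by (simp add: simple_val_def)
next
  case (Cons x L)
  obtain A C where x: "x = (A, C)" by (cases x)
  note rep = simple_rep_Cons[OF Cons.prems(1)[unfolded x]]
  have "\<forall>j<length L. t \<notin> fst (L ! j)"
    using Cons.prems(2) by (metis Suc_mono length_Cons nth_Cons_Suc)
  then have "simple_val p L t = {0}" using Cons.IH[OF rep(1)] by blast
  moreover have "t \<notin> A" using Cons.prems(2) x by force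
  then have "sscale (indicator A t) C = {0}"
    using rep(3) sscale_0[of C] by (simp add: cbc_def)
  ultimately show ?case
    by (simp add: simple_val_def x msum_eq_sn_closure sn_closure_zero)
qed

lemma simple_val_inside:
  assumes "simple_rep p L" "j < length L" "t \<in> fst (L ! j)"
  shows "simple_val p L t = snd (L ! j)"
  using assms
proof (induction L arbitrary: j)
  case Nil
  then show ?case by simp
next
  case (Cons x L)
  obtain A C where x: "x = (A, C)" by (cases x)
  note rep = simple_rep_Cons[OF Cons.prems(1)[unfolded x]]
  have val: "simple_val p (x # L) t = sn_closure p (sscale (indicator A t) C + simple_val p L t)"
    by (simp add: simple_val_def x msum_eq_sn_closure)
  show ?case
  proof (cases j)
    case 0
    then have "t \<in> A" using Cons.prems(3) x by simp
    then have "\<forall>k<length L. t \<notin> fst (L ! k)" using rep(4) by blast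
    then have "simple_val p L t = {0}" by (rule simple_val_outside[OF rep(1)])
    moreover have "sscale (indicator A t) C = C" using \<open>t \<in> A\<close> by (simp add: sscale_def)
    ultimately show ?thesis
      using val 0 x rep(3) sn_closure_closed by (simp add: cbc_def)
  next
    case (Suc k)
    then have k: "k < length L" "t \<in> fst (L ! k)" using Cons.prems(2,3) by auto
    then have "t \<notin> A" using rep(4) by blast
    then have "sscale (indicator A t) C = {0}" using rep(3) by (force simp: sscale_def cbc_def)
    moreover have "simple_val p L t = snd (L ! k)" using Cons.IH[OF rep(1) k] .
    moreover have "snd (L ! k) \<in> cbc p" using rep(1) k(1) by (simp add: simple_rep_def)
    ultimately show ?thesis
      using val Suc sn_closure_closed by (simp add: cbc_def)
  qed
qed

lemma simple_val_cell:
  assumes "simple_rep p L" "t \<in> cell L j"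
  shows "simple_val p L t = cell_value L j"
proof (cases "j < length L")
  case True
  then show ?thesis using assms simple_val_inside by (simp add: cell_def cell_value_def)
next
  case False
  then have "\<forall>k<length L. t \<notin> fst (L ! k)" using assms(2) by (simp add: cell_def)
  then show ?thesis using simple_val_outside[OF assms(1)] False by (simp add: cell_value_def)
qed

lemma cell_value_in_cbc: "simple_rep p L \<Longrightarrow> cell_value L j \<in> cbc p"
  using zero_in_cbc by (auto simp: cell_value_def simple_rep_def)

lemma simple_val_in_cbc:
  assumes "simple_rep p L" "t \<in> {0..1}" shows "simple_val p L t \<in> cbc p"
proof -
  obtain j where "t \<in> cell L j" using cells_cover assms(2) by blast
  then show ?thesis using simple_val_cell[OF assms(1)] cell_value_in_cbc[OF assms(1)] by simp
qed

lemma ne_bounded_simple_int_sum: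
  assumes "simple_rep p L" shows "ne_bounded (p i) (simple_int_sum L E)"
  unfolding simple_int_sum_def
  using assms by (intro ne_bounded_sum ne_bounded_sscale cbc_ne_bounded) (auto simp: simple_rep_def)

lemma ne_bounded_simple_int_hausdist_sum:
  assumes "simple_rep p L"
  shows "ne_bounded (p i) (simple_int p L E) \<and> sn_hausdist (p i) (simple_int p L E) (simple_int_sum L E) \<le> 0"
  using assms
proof (induction L)
  case Nil
  then show ?case using hausdist_self[of "{0}"] ne_bounded_zero
    by (simp add: simple_int_def simple_int_sum_def)
next
  case (Cons x L)
  obtain A C where x: "x = (A, C)" by (cases x)
  note rep = simple_rep_Cons[OF Cons.prems[unfolded x]]
  define X where "X = sscale (measure lebesgue (A \<inter> E)) C"
  define S where "S = simple_int p L E"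
  define T where "T = simple_int_sum L E"
  have X: "ne_bounded (p i) X"
    using rep(3) cbc_ne_bounded ne_bounded_sscale by (simp add: X_def)
  have S: "ne_bounded (p i) S" "sn_hausdist (p i) S T \<le> 0" and T: "ne_bounded (p i) T"
    using Cons.IH[OF rep(1)] ne_bounded_simple_int_sum[OF rep(1)] by (simp_all add: S_def T_def)
  have eqS: "simple_int p (x # L) E = sn_closure p (X + S)"
    by (simp add: simple_int_def x X_def S_def msum_eq_sn_closure)
  have eqT: "simple_int_sum (x # L) E = X + T"
    by (simp add: simple_int_sum_def x X_def T_def lessThan_Suc_eq_insert_0 sum.reindex)
  have XS: "ne_bounded (p i) (X + S)" and XT: "ne_bounded (p i) (X + T)"
    using X S T ne_bounded_plus by auto
  have "sn_hausdist (p i) (sn_closure p (X + S)) (X + T)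
      \<le> sn_hausdist (p i) (sn_closure p (X + S)) (X + S) + sn_hausdist (p i) (X + S) (X + T)"
    using hausdist_triangle ne_bounded_sn_closure XS XT by blast
  also have "\<dots> \<le> 0 + (sn_hausdist (p i) X X + sn_hausdist (p i) S T)"
    using hausdist_sn_closure[OF XS] hausdist_plus_le[OF X S(1) X T] by (intro add_mono)
  also have "\<dots> \<le> 0" using hausdist_self[OF ne_boundedD[OF X], of i] S(2) by simp
  finally show ?case using eqS eqT ne_bounded_sn_closure[OF XS] by simp
qed

lemma measure_cell_split:
  assumes "simple_rep p L" "X \<in> sets lebesgue_01"
  shows "measure lebesgue X = (\<Sum>k\<le>length L. measure lebesgue (cell L k \<inter> X))"
proof -
  have "measure lebesgue_01 X = (\<Sum>k\<le>length L. measure lebesgue_01 (cell L k \<inter> X))"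
    by (intro lebesgue_01.measure_partition cell_disjoint cell_sets)
       (use assms cells_cover[of L] in auto)
  moreover have "cell L k \<inter> X \<in> sets lebesgue_01" for k
    using assms cell_sets by blast
  ultimately show ?thesis using assms(2) by (simp add: measure_lebesgue_01)
qed

lemma hausdist_simple_int_sum_le:
  assumes L: "simple_rep p L" and L': "simple_rep p L'" and E: "E \<in> sets lebesgue_01"
  shows "sn_hausdist (p i) (simple_int_sum L E) (simple_int_sum L' E)
    \<le> (\<Sum>(j, k)\<in>{..length L} \<times> {..length L'}. measure lebesgue (cell L j \<inter> cell L' k \<inter> E)
          * sn_hausdist (p i) (cell_value L j) (cell_value L' k))"
proof -
  define I where "I = {..length L} \<times> {..length L'}"
  define c where "c j k = measure lebesgue (cell L j \<inter> cell L' k \<inter> E)" for j k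
  have cv: "cell_value L j \<in> cbc p" "cell_value L' k \<in> cbc p" for j k
    using cell_value_in_cbc L L' by auto
  have sets: "cell L j \<inter> E \<in> sets lebesgue_01" "cell L' k \<inter> E \<in> sets lebesgue_01" for j k
    using cell_sets L L' E by auto
  have "sscale (measure lebesgue (cell L j \<inter> E)) (cell_value L j)
      = (\<Sum>k\<le>length L'. sscale (c j k) (cell_value L j))" for j
  proof -
    have "measure lebesgue (cell L j \<inter> E) = (\<Sum>k\<le>length L'. c j k)"
      unfolding measure_cell_split[OF L' sets(1)] c_def by (simp add: Int_ac)
    then show ?thesis by (simp only:) (rule sscale_sum_convex, use cv in \<open>auto simp: cbc_def c_def\<close>)
  qed
  then have "simple_int_sum L E = (\<Sum>j\<le>length L. \<Sum>k\<le>length L'. sscale (c j k) (cell_value L j))"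
    unfolding simple_int_sum_cells by simp
  also have "\<dots> = (\<Sum>(j, k)\<in>I. sscale (c j k) (cell_value L j))"
    by (simp add: I_def sum.cartesian_product)
  finally have SL: "simple_int_sum L E = (\<Sum>(j, k)\<in>I. sscale (c j k) (cell_value L j))" .
  have "sscale (measure lebesgue (cell L' k \<inter> E)) (cell_value L' k)
      = (\<Sum>j\<le>length L. sscale (c j k) (cell_value L' k))" for k
  proof -
    have "measure lebesgue (cell L' k \<inter> E) = (\<Sum>j\<le>length L. c j k)"
      unfolding measure_cell_split[OF L sets(2)] c_def by (simp add: Int_ac)
    then show ?thesis by (simp only:) (rule sscale_sum_convex, use cv in \<open>auto simp: cbc_def c_def\<close>)
  qed
  then have "simple_int_sum L' E = (\<Sum>k\<le>length L'. \<Sum>j\<le>length L. sscale (c j k) (cell_value L' k))"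
    unfolding simple_int_sum_cells by simp
  also have "\<dots> = (\<Sum>(j, k)\<in>I. sscale (c j k) (cell_value L' k))"
    by (subst sum.swap) (simp add: I_def sum.cartesian_product)
  finally have SL': "simple_int_sum L' E = (\<Sum>(j, k)\<in>I. sscale (c j k) (cell_value L' k))" .
  have "sn_hausdist (p i) (simple_int_sum L E) (simple_int_sum L' E)
      \<le> (\<Sum>(j, k)\<in>I. sn_hausdist (p i) (sscale (c j k) (cell_value L j)) (sscale (c j k) (cell_value L' k)))"
    unfolding SL SL' case_prod_beta
    using cv by (intro hausdist_sum_le ne_bounded_sscale cbc_ne_bounded) (auto simp: I_def)
  also have "\<dots> \<le> (\<Sum>(j, k)\<in>I. c j k * sn_hausdist (p i) (cell_value L j) (cell_value L' k))"
    unfolding case_prod_beta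
    using cv by (intro sum_mono hausdist_sscale_le cbc_ne_bounded) (auto simp: c_def)
  finally show ?thesis by (simp add: I_def c_def)
qed

lemma hausdist_simple_int_le_sum:
  assumes L: "simple_rep p L" and L': "simple_rep p L'"
  shows "sn_hausdist (p i) (simple_int p L E) (simple_int p L' E)
    \<le> sn_hausdist (p i) (simple_int_sum L E) (simple_int_sum L' E)"
proof -
  note L_approx = ne_bounded_simple_int_hausdist_sum[OF L, of i E]
    and L'_approx = ne_bounded_simple_int_hausdist_sum[OF L', of i E]
  note bd = L_approx[THEN conjunct1] L'_approx[THEN conjunct1]
    ne_bounded_simple_int_sum[OF L, of i E] ne_bounded_simple_int_sum[OF L', of i E]
  have "sn_hausdist (p i) (simple_int_sum L' E) (simple_int p L' E) \<le> 0"
    using L'_approx hausdist_commute[of i "simple_int_sum L' E"] by simp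
  then show ?thesis
    using hausdist_triangle[OF bd(1,3,2)] hausdist_triangle[OF bd(3,4,2)] L_approx by linarith
qed

lemma integral_hausdist_simple_vals:
  assumes L: "simple_rep p L" and L': "simple_rep p L'" and E: "E \<in> sets lebesgue_01"
  shows "integrable lebesgue_01 (\<lambda>t. indicator E t * sn_hausdist (p i) (simple_val p L t) (simple_val p L' t))"
    and "(\<integral>t. indicator E t * sn_hausdist (p i) (simple_val p L t) (simple_val p L' t) \<partial>lebesgue_01)
      = (\<Sum>(j, k)\<in>{..length L} \<times> {..length L'}. measure lebesgue (cell L j \<inter> cell L' k \<inter> E)
          * sn_hausdist (p i) (cell_value L j) (cell_value L' k))"
proof -
  define I where "I = {..length L} \<times> {..length L'}"
  define A where "A = (\<lambda>(j, k). cell L j \<inter> cell L' k)"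
  define h where "h = (\<lambda>(j, k). sn_hausdist (p i) (cell_value L j) (cell_value L' k))"
  have disj: "disjoint_family_on A I"
    unfolding disjoint_family_on_def
  proof (intro ballI impI)
    fix jk jk' assume "jk \<in> I" "jk' \<in> I" "jk \<noteq> jk'"
    then obtain j k j' k' where jk: "jk = (j, k)" "jk' = (j', k')" "j \<le> length L" "j' \<le> length L"
      "k \<le> length L'" "k' \<le> length L'" "j \<noteq> j' \<or> k \<noteq> k'"
      by (auto simp: I_def)
    then show "A jk \<inter> A jk' = {}"
      using cell_disjoint[OF L, unfolded disjoint_family_on_def, rule_format, of j j']
        cell_disjoint[OF L', unfolded disjoint_family_on_def, rule_format, of k k']
      by (auto simp: A_def)
  qed
  have sets: "A jk \<in> sets lebesgue_01" for jk
    using cell_sets[OF L] cell_sets[OF L'] by (auto simp: A_def split: prod.split)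
  have cover: "space lebesgue_01 \<subseteq> (\<Union>jk\<in>I. A jk)"
    using cells_cover[of L] cells_cover[of L'] by (fastforce simp: A_def I_def)
  have const: "sn_hausdist (p i) (simple_val p L t) (simple_val p L' t) = h jk" if "t \<in> A jk" for jk t
    using that simple_val_cell[OF L] simple_val_cell[OF L'] by (auto simp: A_def h_def split: prod.splits)
  note step = lebesgue_01.integral_indicator_step_function[OF _ disj sets cover const E]
  show "integrable lebesgue_01 (\<lambda>t. indicator E t * sn_hausdist (p i) (simple_val p L t) (simple_val p L' t))"
    by (rule step(1)) (simp add: I_def)
  have "(\<integral>t. indicator E t * sn_hausdist (p i) (simple_val p L t) (simple_val p L' t) \<partial>lebesgue_01)
      = (\<Sum>jk\<in>I. h jk * measure lebesgue_01 (A jk \<inter> E))"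
    by (rule step(2)) (simp add: I_def)
  also have "\<dots> = (\<Sum>(j, k)\<in>{..length L} \<times> {..length L'}. measure lebesgue (cell L j \<inter> cell L' k \<inter> E)
          * sn_hausdist (p i) (cell_value L j) (cell_value L' k))"
  proof -
    have "cell L j \<inter> (cell L' k \<inter> E) \<in> sets lebesgue_01" for j k
      using cell_sets[OF L] cell_sets[OF L'] E by blast
    then show ?thesis by (simp add: I_def A_def h_def case_prod_beta measure_lebesgue_01 mult.commute Int_assoc)
  qed
  finally show "(\<integral>t. indicator E t * sn_hausdist (p i) (simple_val p L t) (simple_val p L' t) \<partial>lebesgue_01)
      = (\<Sum>(j, k)\<in>{..length L} \<times> {..length L'}. measure lebesgue (cell L j \<inter> cell L' k \<inter> E)
          * sn_hausdist (p i) (cell_value L j) (cell_value L' k))" .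
qed

lemma hausdist_simple_int_le_integral:
  assumes L: "simple_rep p L" and L': "simple_rep p L'" and E: "E \<in> sets lebesgue_01"
  shows "sn_hausdist (p i) (simple_int p L E) (simple_int p L' E)
      \<le> (\<integral>t. indicator E t * sn_hausdist (p i) (simple_val p L t) (simple_val p L' t) \<partial>lebesgue_01)"
proof -
  have "sn_hausdist (p i) (simple_int p L E) (simple_int p L' E)
      \<le> sn_hausdist (p i) (simple_int_sum L E) (simple_int_sum L' E)"
    by (rule hausdist_simple_int_le_sum[OF L L'])
  also have "\<dots> \<le> (\<Sum>(j, k)\<in>{..length L} \<times> {..length L'}. measure lebesgue (cell L j \<inter> cell L' k \<inter> E)
          * sn_hausdist (p i) (cell_value L j) (cell_value L' k))"
    by (rule hausdist_simple_int_sum_le[OF L L' E])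
  also have "\<dots> = (\<integral>t. indicator E t * sn_hausdist (p i) (simple_val p L t) (simple_val p L' t) \<partial>lebesgue_01)"
    by (rule integral_hausdist_simple_vals(2)[OF L L' E, symmetric])
  finally show ?thesis .
qed

lemma ne_bounded_simple_val: "simple_rep p L \<Longrightarrow> t \<in> {0..1} \<Longrightarrow> ne_bounded (p i) (simple_val p L t)"
  by (rule cbc_ne_bounded[OF simple_val_in_cbc])

lemma integrable_hausdist_simple_vals:
  assumes "simple_rep p L" "simple_rep p L'"
  shows "integrable lebesgue_01 (\<lambda>t. sn_hausdist (p i) (simple_val p L t) (simple_val p L' t))"
proof -
  have "integrable lebesgue_01
      (\<lambda>t. indicator {0..1} t * sn_hausdist (p i) (simple_val p L t) (simple_val p L' t))"
    using integral_hausdist_simple_vals(1)[OF assms, of "{0..1}"] by simp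
  then show ?thesis by (rule Bochner_Integration.integrable_cong[THEN iffD1, rotated 2]) auto
qed

lemma hausdist_limit_unique:
  assumes "\<And>n i. ne_bounded (p i) (S n)" "x \<in> cbc p" "y \<in> cbc p"
    and "\<And>i. (\<lambda>n. sn_hausdist (p i) (S n) x) \<longlonglongrightarrow> 0" "\<And>i. (\<lambda>n. sn_hausdist (p i) (S n) y) \<longlonglongrightarrow> 0"
  shows "x = y"
proof (rule cbc_eqI[OF assms(2,3)])
  fix i
  have le: "sn_hausdist (p i) x y \<le> sn_hausdist (p i) (S n) x + sn_hausdist (p i) (S n) y" for n
    using hausdist_triangle[OF cbc_ne_bounded[OF assms(2), of i] assms(1)[where n=n and i=i] cbc_ne_bounded[OF assms(3), of i]]
      hausdist_commute[of i x "S n"] by simp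
  have "(\<lambda>n. sn_hausdist (p i) (S n) x + sn_hausdist (p i) (S n) y) \<longlonglongrightarrow> 0 + 0"
    using assms(4,5) by (rule tendsto_add)
  then have "sn_hausdist (p i) x y \<le> 0 + 0" by (rule LIMSEQ_le_const) (use le in blast)
  then show "sn_hausdist (p i) x y \<le> 0" by simp
qed

end

section \<open>Multifunctions with compact convex values\<close>

locale ck_multifunction = frechet +
  fixes \<Gamma> :: "real \<Rightarrow> 'a::real_vector set"
  assumes ck_valued: "t \<in> {0..1} \<Longrightarrow> \<Gamma> t \<in> ck p"
begin

abbreviation approx_dist :: "nat \<Rightarrow> (real set \<times> 'a set) list \<Rightarrow> real \<Rightarrow> real" where
  "approx_dist i L t \<equiv> sn_hausdist (p i) (simple_val p L t) (\<Gamma> t)"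

lemma ne_bounded_values: "t \<in> {0..1} \<Longrightarrow> ne_bounded (p i) (\<Gamma> t)"
  by (rule ck_ne_bounded[OF ck_valued])

lemma approx_dist_nonneg: "simple_rep p L \<Longrightarrow> t \<in> {0..1} \<Longrightarrow> 0 \<le> approx_dist i L t"
  by (rule hausdist_nonneg[OF ne_bounded_simple_val ne_bounded_values])

lemma hausdist_simple_vals_le:
  assumes "simple_rep p L" "simple_rep p L'" "t \<in> {0..1}"
  shows "sn_hausdist (p i) (simple_val p L t) (simple_val p L' t) \<le> approx_dist i L t + approx_dist i L' t"
  using hausdist_triangle[OF ne_bounded_simple_val[OF assms(1,3), of i] ne_bounded_values[OF assms(3), of i]
      ne_bounded_simple_val[OF assms(2,3), of i]] hausdist_commute[of i "\<Gamma> t"] by simp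

lemma approx_dist_le:
  assumes "simple_rep p L" "simple_rep p L'" "t \<in> {0..1}"
  shows "approx_dist i L t \<le> sn_hausdist (p i) (simple_val p L t) (simple_val p L' t) + approx_dist i L' t"
  by (rule hausdist_triangle[OF ne_bounded_simple_val[OF assms(1,3)] ne_bounded_simple_val[OF assms(2,3)]
      ne_bounded_values[OF assms(3)]])

text \<open>Fatou's lemma, applied to the distances between the values of \<open>L0\<close> and \<open>L m\<close>, which converge
  almost everywhere to \<open>approx_dist i L0\<close>.\<close>
lemma approx_dist_integral_le:
  assumes L0: "simple_rep p L0" and L: "\<And>m. simple_rep p (L m)"
    and lim: "AE t in lebesgue_01. (\<lambda>m. approx_dist i (L m) t) \<longlonglongrightarrow> 0"
    and bound: "\<And>m. m \<ge> N \<Longrightarrow>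
      (\<integral>t. sn_hausdist (p i) (simple_val p L0 t) (simple_val p (L m) t) \<partial>lebesgue_01) \<le> B"
  shows "integrable lebesgue_01 (approx_dist i L0)" "integral\<^sup>L lebesgue_01 (approx_dist i L0) \<le> B"
proof -
  define h where "h m t = sn_hausdist (p i) (simple_val p L0 t) (simple_val p (L m) t)" for m t
  have h_int: "integrable lebesgue_01 (h m)" for m
    unfolding h_def by (rule integrable_hausdist_simple_vals[OF L0 L])
  have h_nonneg: "AE t in lebesgue_01. 0 \<le> h m t" for m
    by (rule AE_I2) (auto simp: h_def intro!: hausdist_nonneg ne_bounded_simple_val L0 L)
  have "AE t in lebesgue_01. t \<in> {0..1}" by (rule AE_I2) simp
  with lim have h_lim: "AE t in lebesgue_01. (\<lambda>m. h m t) \<longlonglongrightarrow> approx_dist i L0 t"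
  proof eventually_elim
    case (elim t)
    show ?case
    proof (rule tendsto_sandwich)
      have "approx_dist i L0 t - approx_dist i (L m) t \<le> h m t" for m
        using approx_dist_le[OF L0 L[of m] elim(2), of i] by (simp add: h_def)
      then show "\<forall>\<^sub>F m in sequentially. approx_dist i L0 t - approx_dist i (L m) t \<le> h m t"
        by (simp add: always_eventually)
      have "h m t \<le> approx_dist i L0 t + approx_dist i (L m) t" for m
        using hausdist_simple_vals_le[OF L0 L[of m] elim(2), of i] by (simp add: h_def)
      then show "\<forall>\<^sub>F m in sequentially. h m t \<le> approx_dist i L0 t + approx_dist i (L m) t"
        by (simp add: always_eventually)
    qed (use tendsto_diff[OF tendsto_const elim(1)] tendsto_add[OF tendsto_const elim(1)] in auto)
  qed
  have "approx_dist i L0 \<in> borel_measurable lebesgue_01"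
    by (rule borel_measurable_lebesgue_01_AE_tendsto[OF borel_measurable_integrable[OF h_int] h_lim])
  moreover have "\<And>m. m \<ge> N \<Longrightarrow> integral\<^sup>L lebesgue_01 (h m) \<le> B"
    using bound unfolding h_def by blast
  ultimately show "integrable lebesgue_01 (approx_dist i L0)" "integral\<^sup>L lebesgue_01 (approx_dist i L0) \<le> B"
    using integrable_AE_limit_bounded[OF h_int h_nonneg h_lim] by blast+
qed

lemma int_seq_approx_L1:
  assumes S: "int_seq p \<Gamma> L"
  shows "integrable lebesgue_01 (approx_dist i (L n))"
    "(\<lambda>n. integral\<^sup>L lebesgue_01 (approx_dist i (L n))) \<longlonglongrightarrow> 0"
proof -
  have rep: "simple_rep p (L n)" for n using S by (simp add: int_seq_def)
  have lim: "AE t in lebesgue_01. (\<lambda>m. approx_dist i (L m) t) \<longlonglongrightarrow> 0"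
    using S by (simp add: int_seq_def hausd_eq_sn_hausdist)
  define h where "h n m = (\<integral>t. sn_hausdist (p i) (simple_val p (L n) t) (simple_val p (L m) t) \<partial>lebesgue_01)"
    for n m
  have cauchy: "\<exists>N. \<forall>m\<ge>N. \<forall>n\<ge>N. h n m < e" if "e > 0" for e
    using S that by (simp add: int_seq_def h_def hausd_eq_sn_hausdist)
  have h_triangle: "h n m \<le> h n k + h k m" for n m k
  proof -
    have "h n m \<le> (\<integral>t. sn_hausdist (p i) (simple_val p (L n) t) (simple_val p (L k) t)
        + sn_hausdist (p i) (simple_val p (L k) t) (simple_val p (L m) t) \<partial>lebesgue_01)"
      unfolding h_def
      by (intro integral_mono Bochner_Integration.integrable_add integrable_hausdist_simple_vals rep
          hausdist_triangle ne_bounded_simple_val) auto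
    then show ?thesis
      by (simp add: h_def Bochner_Integration.integral_add integrable_hausdist_simple_vals rep)
  qed
  obtain N1 where N1: "\<And>m n. m \<ge> N1 \<Longrightarrow> n \<ge> N1 \<Longrightarrow> h n m < 1" using cauchy[of 1] by auto
  have "h n m \<le> h n N1 + 1" if "m \<ge> N1" for m
    using h_triangle[of n m N1] N1[of m N1] that by simp
  then show "integrable lebesgue_01 (approx_dist i (L n))"
    using approx_dist_integral_le(1)[OF rep rep lim] unfolding h_def by blast
  show "(\<lambda>n. integral\<^sup>L lebesgue_01 (approx_dist i (L n))) \<longlonglongrightarrow> 0"
  proof (rule LIMSEQ_I)
    fix r :: real assume "r > 0"
    then obtain N where N: "\<And>m n. m \<ge> N \<Longrightarrow> n \<ge> N \<Longrightarrow> h n m < r / 2"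
      using cauchy[of "r / 2"] by auto
    have "norm (integral\<^sup>L lebesgue_01 (approx_dist i (L n))) < r" if "n \<ge> N" for n
    proof -
      have "integral\<^sup>L lebesgue_01 (approx_dist i (L n)) \<le> r / 2"
        using approx_dist_integral_le(2)[OF rep rep lim, of N] N[OF _ that] unfolding h_def
        by (meson less_imp_le)
      moreover have "0 \<le> integral\<^sup>L lebesgue_01 (approx_dist i (L n))"
        by (rule integral_nonneg_AE, rule AE_I2) (simp add: approx_dist_nonneg rep)
      ultimately show ?thesis using \<open>r > 0\<close> by simp
    qed
    then show "\<exists>N. \<forall>n\<ge>N. norm (integral\<^sup>L lebesgue_01 (approx_dist i (L n)) - 0) < r" by auto
  qed
qed

lemma hausdist_simple_ints_le:
  assumes L: "simple_rep p L" and L': "simple_rep p L'" and E: "E \<in> sets lebesgue_01"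
    and u: "integrable lebesgue_01 u" "\<And>t. t \<in> {0..1} \<Longrightarrow> approx_dist i L t \<le> u t"
    and v: "integrable lebesgue_01 v" "\<And>t. t \<in> {0..1} \<Longrightarrow> approx_dist i L' t \<le> v t"
  shows "sn_hausdist (p i) (simple_int p L E) (simple_int p L' E)
     \<le> (\<integral>t. indicator E t * u t \<partial>lebesgue_01) + (\<integral>t. indicator E t * v t \<partial>lebesgue_01)"
proof -
  have ind_int: "integrable lebesgue_01 (\<lambda>t. indicator E t * f t)" if "integrable lebesgue_01 f" for f :: "real \<Rightarrow> real"
    using integrable_real_mult_indicator[OF E that] by (simp add: mult.commute)
  have "sn_hausdist (p i) (simple_int p L E) (simple_int p L' E)
      \<le> (\<integral>t. indicator E t * sn_hausdist (p i) (simple_val p L t) (simple_val p L' t) \<partial>lebesgue_01)"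
    by (rule hausdist_simple_int_le_integral[OF L L' E])
  also have "\<dots> \<le> (\<integral>t. indicator E t * u t + indicator E t * v t \<partial>lebesgue_01)"
  proof (rule integral_mono)
    fix t assume "t \<in> space lebesgue_01"
    then have t: "t \<in> {0..1}" by simp
    show "indicator E t * sn_hausdist (p i) (simple_val p L t) (simple_val p L' t)
        \<le> indicator E t * u t + indicator E t * v t"
      using hausdist_simple_vals_le[OF L L' t, of i] u(2)[OF t] v(2)[OF t]
      by (auto simp: indicator_def)
  qed (use integral_hausdist_simple_vals(1)[OF L L' E] ind_int u(1) v(1) in auto)
  also have "\<dots> = (\<integral>t. indicator E t * u t \<partial>lebesgue_01) + (\<integral>t. indicator E t * v t \<partial>lebesgue_01)"
    by (rule Bochner_Integration.integral_add[OF ind_int[OF u(1)] ind_int[OF v(1)]])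
  finally show ?thesis .
qed

lemma int_seq_imp_p_int_seq:
  assumes S: "int_seq p \<Gamma> L"
  shows "p_int_seq p \<Gamma> (\<lambda>i. L)"
proof -
  have rep: "simple_rep p (L n)" for n using S by (simp add: int_seq_def)
  note int = int_seq_approx_L1(1)[OF S] and lim = int_seq_approx_L1(2)[OF S]
  have nonneg: "AE t in lebesgue_01. 0 \<le> approx_dist i (L n) t" for i n
    by (rule AE_I2) (simp add: approx_dist_nonneg rep)
  have in_measure: "(\<lambda>n. measure lebesgue {t\<in>{0..1}. e \<le> approx_dist i (L n) t}) \<longlonglongrightarrow> 0"
    if "e > 0" for i e
  proof -
    have "{t\<in>space lebesgue_01. e \<le> approx_dist i (L n) t} \<in> sets lebesgue_01" for n
      using borel_measurable_integrable[OF int] by measurable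
    then have "measure lebesgue {t\<in>{0..1}. e \<le> approx_dist i (L n) t}
        = measure lebesgue_01 {t\<in>space lebesgue_01. e \<le> approx_dist i (L n) t}" for n
      by (simp add: measure_lebesgue_01)
    then show ?thesis using L1_tendsto_imp_tendsto_in_measure[OF int nonneg lim that] by simp
  qed
  have on_sets: "(\<lambda>n. LINT t:E|lebesgue. approx_dist i (L n) t) \<longlonglongrightarrow> 0"
    if E: "E \<in> sets lebesgue_01" for i E
  proof -
    have "(\<lambda>n. \<integral>t. indicator E t * approx_dist i (L n) t \<partial>lebesgue_01) \<longlonglongrightarrow> 0"
      by (rule tendsto_sandwich[where f="\<lambda>_. 0", OF _ _ tendsto_const lim[of i]])
         (use integral_indicator_mult_le[OF E int nonneg, of i] in \<open>auto intro: always_eventually\<close>)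
    then show ?thesis by (simp add: set_integral_lebesgue_01[OF E])
  qed
  have "measurable_by_seminorm p \<Gamma>"
    using S unfolding measurable_by_seminorm_def int_seq_def by blast
  then show ?thesis
    using S int in_measure on_sets by (simp add: p_int_seq_def int_seq_def hausd_eq_sn_hausdist)
qed

lemma integrable_imp_p_integrable:
  assumes "integrable_mf p \<Gamma>" shows "p_integrable_mf p \<Gamma>"
proof -
  obtain L where S: "int_seq p \<Gamma> L" and
    lim: "\<forall>E\<in>sets lebesgue_01. \<exists>x\<in>ck p. \<forall>i. (\<lambda>n. hausd p i (simple_int p (L n) E) x) \<longlonglongrightarrow> 0"
    using assms by (auto simp: integrable_mf_def)
  have rep: "simple_rep p (L n)" for n using S by (simp add: int_seq_def)
  have uniq: "\<exists>!x. x \<in> ck p \<and> (\<forall>i. (\<lambda>n. hausd p i (simple_int p (L n) E) x) \<longlonglongrightarrow> 0)"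
    if E: "E \<in> sets lebesgue_01" for E
  proof -
    obtain x where x: "x \<in> ck p" "\<forall>i. (\<lambda>n. hausd p i (simple_int p (L n) E) x) \<longlonglongrightarrow> 0"
      using lim E by blast
    show ?thesis
    proof (rule ex1I[of _ x])
      fix y assume y: "y \<in> ck p \<and> (\<forall>i. (\<lambda>n. hausd p i (simple_int p (L n) E) y) \<longlonglongrightarrow> 0)"
      show "y = x"
      proof (rule hausdist_limit_unique)
        show "ne_bounded (p i) (simple_int p (L n) E)" for n i
          using ne_bounded_simple_int_hausdist_sum[OF rep] by simp
        show "y \<in> cbc p" "x \<in> cbc p" using x(1) y ck_subset_cbc by auto
        show "(\<lambda>n. sn_hausdist (p i) (simple_int p (L n) E) y) \<longlonglongrightarrow> 0"
          "(\<lambda>n. sn_hausdist (p i) (simple_int p (L n) E) x) \<longlonglongrightarrow> 0" for i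
          using x(2) y by (simp_all add: hausd_eq_sn_hausdist)
      qed
    qed (use x in blast)
  qed
  show ?thesis
    unfolding p_integrable_mf_def
    by (intro exI[of _ "\<lambda>i. L"] conjI ballI int_seq_imp_p_int_seq[OF S] uniq)
qed

lemma hausdist_simple_int_limit_le:
  assumes L: "simple_rep p L" and u: "integrable lebesgue_01 u" "\<And>t. t \<in> {0..1} \<Longrightarrow> approx_dist i L t \<le> u t"
    and E: "E \<in> sets lebesgue_01" and x: "x \<in> ck p"
    and M: "\<And>n. simple_rep p (M n)" "\<And>n. integrable lebesgue_01 (approx_dist i (M n))"
      "(\<lambda>n. \<integral>t. indicator E t * approx_dist i (M n) t \<partial>lebesgue_01) \<longlonglongrightarrow> 0"
      "(\<lambda>n. sn_hausdist (p i) (simple_int p (M n) E) x) \<longlonglongrightarrow> 0"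
  shows "sn_hausdist (p i) (simple_int p L E) x \<le> (\<integral>t. indicator E t * u t \<partial>lebesgue_01)"
proof -
  let ?c = "\<integral>t. indicator E t * u t \<partial>lebesgue_01"
  have le: "sn_hausdist (p i) (simple_int p L E) x
      \<le> ?c + ((\<integral>t. indicator E t * approx_dist i (M n) t \<partial>lebesgue_01)
              + sn_hausdist (p i) (simple_int p (M n) E) x)" for n
  proof -
    have "sn_hausdist (p i) (simple_int p L E) x
        \<le> sn_hausdist (p i) (simple_int p L E) (simple_int p (M n) E) + sn_hausdist (p i) (simple_int p (M n) E) x"
      using ne_bounded_simple_int_hausdist_sum[OF L] ne_bounded_simple_int_hausdist_sum[OF M(1)] ck_ne_bounded[OF x]
      by (intro hausdist_triangle) auto
    moreover have "sn_hausdist (p i) (simple_int p L E) (simple_int p (M n) E)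
        \<le> ?c + (\<integral>t. indicator E t * approx_dist i (M n) t \<partial>lebesgue_01)"
      using hausdist_simple_ints_le[OF L M(1)[of n] E u M(2)[of n] order_refl] by simp
    ultimately show ?thesis by simp
  qed
  have "(\<lambda>n. ?c + ((\<integral>t. indicator E t * approx_dist i (M n) t \<partial>lebesgue_01)
              + sn_hausdist (p i) (simple_int p (M n) E) x)) \<longlonglongrightarrow> ?c + (0 + 0)"
    using M(3,4) by (intro tendsto_add tendsto_const)
  then have "sn_hausdist (p i) (simple_int p L E) x \<le> ?c + (0 + 0)"
    by (rule LIMSEQ_le_const) (use le in blast)
  then show ?thesis by simp
qed

definition fast_approx_seq :: "(nat \<Rightarrow> (real set \<times> 'a set) list) \<Rightarrow> bool" where
  "fast_approx_seq G \<longleftrightarrow> (\<forall>k. simple_rep p (G k) \<and> (\<forall>t\<in>{0..1}. simple_val p (G k) t \<in> ck p)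
     \<and> integrable lebesgue_01 (approx_dist k (G k))
     \<and> integral\<^sup>L lebesgue_01 (approx_dist k (G k)) < (1/2)^k)"

lemma approx_dist_mono:
  assumes "simple_rep p L" "t \<in> {0..1}" "i \<le> k"
  shows "approx_dist i L t \<le> approx_dist k L t"
  by (rule hausdist_mono[OF ne_bounded_simple_val[OF assms(1,2)] ne_bounded_values[OF assms(2)] assms(3)])

lemma fast_approx_seq_AE_tendsto:
  assumes G: "fast_approx_seq G"
  shows "AE t in lebesgue_01. (\<lambda>k. approx_dist i (G k) t) \<longlonglongrightarrow> 0"
proof -
  define \<phi> where "\<phi> k = approx_dist k (G k)" for k
  have rep: "simple_rep p (G k)" and \<phi>_int: "integrable lebesgue_01 (\<phi> k)"
    and \<phi>_small: "integral\<^sup>L lebesgue_01 (\<phi> k) < (1/2)^k" for k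
    using G by (simp_all add: fast_approx_seq_def \<phi>_def)
  have "AE t in lebesgue_01. (\<lambda>k. \<phi> k t) \<longlonglongrightarrow> 0"
  proof (rule AE_tendsto_zero_if_summable_integrals[OF \<phi>_int])
    show "AE t in lebesgue_01. 0 \<le> \<phi> k t" for k
      by (rule AE_I2) (simp add: \<phi>_def approx_dist_nonneg rep)
    then have "0 \<le> integral\<^sup>L lebesgue_01 (\<phi> k)" for k by (rule integral_nonneg_AE)
    then show "summable (\<lambda>k. integral\<^sup>L lebesgue_01 (\<phi> k))"
      using \<phi>_small
      by (intro summable_comparison_test[OF _ summable_geometric[of "1/2"]]) (auto intro!: exI less_imp_le)
  qed
  moreover have "AE t in lebesgue_01. t \<in> {0..1}" by (rule AE_I2) simp
  ultimately show ?thesis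
  proof eventually_elim
    case (elim t)
    show ?case
    proof (rule tendsto_sandwich[where f="\<lambda>_. 0", OF _ _ tendsto_const elim(1)])
      show "\<forall>\<^sub>F k in sequentially. 0 \<le> approx_dist i (G k) t"
        using elim(2) by (simp add: approx_dist_nonneg rep)
      show "\<forall>\<^sub>F k in sequentially. approx_dist i (G k) t \<le> \<phi> k t"
        using approx_dist_mono[OF rep elim(2)] by (auto simp: eventually_sequentially \<phi>_def)
    qed
  qed
qed

lemma fast_approx_seq_L1_cauchy:
  assumes G: "fast_approx_seq G" and e: "e > 0"
  shows "\<exists>N. \<forall>m\<ge>N. \<forall>n\<ge>N.
    (\<integral>t. sn_hausdist (p i) (simple_val p (G n) t) (simple_val p (G m) t) \<partial>lebesgue_01) < e"
proof -
  define \<phi> where "\<phi> k = approx_dist k (G k)" for k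
  have rep: "simple_rep p (G k)" and \<phi>_int: "integrable lebesgue_01 (\<phi> k)"
    and \<phi>_small: "integral\<^sup>L lebesgue_01 (\<phi> k) < (1/2)^k" for k
    using G by (simp_all add: fast_approx_seq_def \<phi>_def)
  obtain N0 where N0: "(1/2::real)^N0 < e/2" using real_arch_pow_inv[of "e/2" "1/2"] e by auto
  have "(\<integral>t. sn_hausdist (p i) (simple_val p (G n) t) (simple_val p (G m) t) \<partial>lebesgue_01) < e"
    if mn: "m \<ge> max N0 i" "n \<ge> max N0 i" for m n
  proof -
    have "sn_hausdist (p i) (simple_val p (G n) t) (simple_val p (G m) t) \<le> \<phi> n t + \<phi> m t"
      if t: "t \<in> {0..1}" for t
      using hausdist_simple_vals_le[OF rep rep t, of i n m]
        approx_dist_mono[OF rep[of n] t, of i n] approx_dist_mono[OF rep[of m] t, of i m] mn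
      by (simp add: \<phi>_def)
    then have "(\<integral>t. sn_hausdist (p i) (simple_val p (G n) t) (simple_val p (G m) t) \<partial>lebesgue_01)
        \<le> (\<integral>t. \<phi> n t + \<phi> m t \<partial>lebesgue_01)"
      by (intro integral_mono integrable_hausdist_simple_vals rep Bochner_Integration.integrable_add \<phi>_int)
         simp
    also have "\<dots> = integral\<^sup>L lebesgue_01 (\<phi> n) + integral\<^sup>L lebesgue_01 (\<phi> m)"
      by (rule Bochner_Integration.integral_add[OF \<phi>_int \<phi>_int])
    also have "\<dots> < e"
    proof -
      have "(1/2::real)^n \<le> (1/2)^N0" "(1/2::real)^m \<le> (1/2)^N0"
        using mn by (auto intro!: power_decreasing)
      then show ?thesis using \<phi>_small[of n] \<phi>_small[of m] N0 by linarith
    qed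
    finally show ?thesis .
  qed
  then show ?thesis by blast
qed

lemma fast_approx_seq_int_seq:
  assumes G: "fast_approx_seq G" shows "int_seq p \<Gamma> G"
proof -
  have "totally_measurable p \<Gamma>"
    unfolding totally_measurable_def
    using G fast_approx_seq_AE_tendsto[OF G] by (auto simp: fast_approx_seq_def hausd_eq_sn_hausdist)
  then show ?thesis
    using G fast_approx_seq_AE_tendsto[OF G] fast_approx_seq_L1_cauchy[OF G]
    by (simp add: int_seq_def fast_approx_seq_def hausd_eq_sn_hausdist)
qed

lemma fast_approx_seq_integral_limit:
  assumes G: "fast_approx_seq G" and E: "E \<in> sets lebesgue_01" and x: "x \<in> ck p"
    and M: "\<And>n. simple_rep p (M n)" "\<And>n. integrable lebesgue_01 (approx_dist i (M n))"
      "(\<lambda>n. \<integral>t. indicator E t * approx_dist i (M n) t \<partial>lebesgue_01) \<longlonglongrightarrow> 0"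
      "(\<lambda>n. sn_hausdist (p i) (simple_int p (M n) E) x) \<longlonglongrightarrow> 0"
  shows "(\<lambda>k. sn_hausdist (p i) (simple_int p (G k) E) x) \<longlonglongrightarrow> 0"
proof (rule tendsto_sandwich[where f="\<lambda>_. 0" and h="\<lambda>k. (1/2)^k"])
  have rep: "simple_rep p (G k)" and int: "integrable lebesgue_01 (approx_dist k (G k))"
    and small: "integral\<^sup>L lebesgue_01 (approx_dist k (G k)) < (1/2)^k" for k
    using G by (simp_all add: fast_approx_seq_def)
  have "sn_hausdist (p i) (simple_int p (G k) E) x \<le> (1/2)^k" if "i \<le> k" for k
  proof -
    have "sn_hausdist (p i) (simple_int p (G k) E) x
        \<le> (\<integral>t. indicator E t * approx_dist k (G k) t \<partial>lebesgue_01)"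
      using approx_dist_mono[OF rep _ that]
      by (intro hausdist_simple_int_limit_le[OF rep int _ E x M]) simp
    also have "\<dots> \<le> integral\<^sup>L lebesgue_01 (approx_dist k (G k))"
      by (rule integral_indicator_mult_le(2)[OF E int], rule AE_I2) (simp add: approx_dist_nonneg rep)
    finally show ?thesis using small[of k] by simp
  qed
  then show "\<forall>\<^sub>F k in sequentially. sn_hausdist (p i) (simple_int p (G k) E) x \<le> (1/2)^k"
    by (auto simp: eventually_sequentially)
  show "\<forall>\<^sub>F k in sequentially. 0 \<le> sn_hausdist (p i) (simple_int p (G k) E) x"
    using ne_bounded_simple_int_hausdist_sum[OF rep] ck_ne_bounded[OF x] by (simp add: hausdist_nonneg)
qed (auto intro: LIMSEQ_power_zero)

lemma p_integrable_imp_integrable: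
  assumes "p_integrable_mf p \<Gamma>" shows "integrable_mf p \<Gamma>"
proof -
  obtain Ls where P: "p_int_seq p \<Gamma> Ls"
    and lim: "\<forall>E\<in>sets lebesgue_01. \<exists>!x. x \<in> ck p \<and> (\<forall>i. (\<lambda>n. hausd p i (simple_int p (Ls i n) E) x) \<longlonglongrightarrow> 0)"
    using assms by (auto simp: p_integrable_mf_def)
  have rep: "simple_rep p (Ls i n)" and ckv: "\<forall>t\<in>{0..1}. simple_val p (Ls i n) t \<in> ck p"
    and int: "integrable lebesgue_01 (approx_dist i (Ls i n))" for i n
    using P by (simp_all add: p_int_seq_def hausd_eq_sn_hausdist)
  have on_sets: "(\<lambda>n. \<integral>t. indicator E t * approx_dist i (Ls i n) t \<partial>lebesgue_01) \<longlonglongrightarrow> 0"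
    if "E \<in> sets lebesgue_01" for E i
    using P that by (simp add: p_int_seq_def hausd_eq_sn_hausdist set_integral_lebesgue_01)
  have full: "(\<lambda>n. integral\<^sup>L lebesgue_01 (approx_dist i (Ls i n))) \<longlonglongrightarrow> 0" for i
  proof -
    have "(\<integral>t. indicator {0..1} t * approx_dist i (Ls i n) t \<partial>lebesgue_01)
        = integral\<^sup>L lebesgue_01 (approx_dist i (Ls i n))" for n
      by (rule Bochner_Integration.integral_cong) auto
    then show ?thesis using on_sets[of "{0..1}" i] by simp
  qed
  have "\<exists>n. integral\<^sup>L lebesgue_01 (approx_dist k (Ls k n)) < (1/2)^k" for k
  proof -
    obtain N where "\<forall>n\<ge>N. norm (integral\<^sup>L lebesgue_01 (approx_dist k (Ls k n)) - 0) < (1/2)^k"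
      using LIMSEQ_D[OF full[of k], of "(1/2)^k"] by auto
    then have "\<bar>integral\<^sup>L lebesgue_01 (approx_dist k (Ls k N))\<bar> < (1/2)^k" by simp
    then show ?thesis by (auto intro: exI[of _ N])
  qed
  then obtain nk where nk: "\<And>k. integral\<^sup>L lebesgue_01 (approx_dist k (Ls k (nk k))) < (1/2)^k"
    by metis
  define G where "G k = Ls k (nk k)" for k
  have G: "fast_approx_seq G"
    using rep ckv int nk by (simp add: fast_approx_seq_def G_def)
  have "\<exists>x\<in>ck p. \<forall>i. (\<lambda>k. hausd p i (simple_int p (G k) E) x) \<longlonglongrightarrow> 0"
    if E: "E \<in> sets lebesgue_01" for E
  proof -
    obtain x where x: "x \<in> ck p" "\<And>i. (\<lambda>n. sn_hausdist (p i) (simple_int p (Ls i n) E) x) \<longlonglongrightarrow> 0"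
      using lim E by (auto simp: hausd_eq_sn_hausdist)
    show ?thesis
      using fast_approx_seq_integral_limit[OF G E x(1) rep int on_sets[OF E] x(2)] x(1)
      by (auto simp: hausd_eq_sn_hausdist)
  qed
  then show ?thesis
    unfolding integrable_mf_def using fast_approx_seq_int_seq[OF G] by blast
qed

lemma integral_eq_p_integral:
  assumes I: "integral_mf_is p \<Gamma> L I" and J: "p_integral_mf_is p \<Gamma> Ls J" and E: "E \<in> sets lebesgue_01"
  shows "I E = J E"
proof -
  have S: "int_seq p \<Gamma> L" and IE: "I E \<in> ck p"
    and I_lim: "\<And>i. (\<lambda>n. sn_hausdist (p i) (simple_int p (L n) E) (I E)) \<longlonglongrightarrow> 0"
    using I E by (auto simp: integral_mf_is_def hausd_eq_sn_hausdist)
  have P: "p_int_seq p \<Gamma> Ls" and JE: "J E \<in> ck p"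
    and J_lim: "\<And>i. (\<lambda>n. sn_hausdist (p i) (simple_int p (Ls i n) E) (J E)) \<longlonglongrightarrow> 0"
    using J E by (auto simp: p_integral_mf_is_def hausd_eq_sn_hausdist)
  have rep: "simple_rep p (L n)" for n using S by (simp add: int_seq_def)
  have rep': "simple_rep p (Ls i n)" and int': "integrable lebesgue_01 (approx_dist i (Ls i n))" for i n
    using P by (simp_all add: p_int_seq_def hausd_eq_sn_hausdist)
  have on_E: "(\<lambda>n. \<integral>t. indicator E t * approx_dist i (Ls i n) t \<partial>lebesgue_01) \<longlonglongrightarrow> 0" for i
    using P E by (simp add: p_int_seq_def hausd_eq_sn_hausdist set_integral_lebesgue_01)
  have "(\<lambda>n. sn_hausdist (p i) (simple_int p (L n) E) (J E)) \<longlonglongrightarrow> 0" for i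
  proof (rule tendsto_sandwich[where f="\<lambda>_. 0", OF _ _ tendsto_const int_seq_approx_L1(2)[OF S, of i]])
    have "sn_hausdist (p i) (simple_int p (L n) E) (J E)
        \<le> (\<integral>t. indicator E t * approx_dist i (L n) t \<partial>lebesgue_01)" for n
      by (rule hausdist_simple_int_limit_le[OF rep int_seq_approx_L1(1)[OF S] _ E JE rep' int' on_E J_lim])
         simp
    also have "\<dots> n \<le> integral\<^sup>L lebesgue_01 (approx_dist i (L n))" for n
      by (rule integral_indicator_mult_le(2)[OF E int_seq_approx_L1(1)[OF S]], rule AE_I2)
         (simp add: approx_dist_nonneg rep)
    finally show "\<forall>\<^sub>F n in sequentially. sn_hausdist (p i) (simple_int p (L n) E) (J E)
        \<le> integral\<^sup>L lebesgue_01 (approx_dist i (L n))"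
      by simp
    show "\<forall>\<^sub>F n in sequentially. 0 \<le> sn_hausdist (p i) (simple_int p (L n) E) (J E)"
      using ne_bounded_simple_int_hausdist_sum[OF rep] ck_ne_bounded[OF JE] by (simp add: hausdist_nonneg)
  qed
  then show ?thesis
    using IE JE I_lim ck_subset_cbc ne_bounded_simple_int_hausdist_sum[OF rep]
    by (intro hausdist_limit_unique[of "\<lambda>n. simple_int p (L n) E"]) auto
qed

end

theorem proposition4p2:
  fixes p :: "nat \<Rightarrow> 'a::real_vector \<Rightarrow> real"
    and \<Gamma> :: "real \<Rightarrow> 'a set"
  assumes "frechet_seminorms p"
    and "\<forall>t\<in>{0..1}. \<Gamma> t \<in> ck p"
  shows "(integrable_mf p \<Gamma> \<longleftrightarrow> p_integrable_mf p \<Gamma>)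
    \<and> (\<forall>L I Ls J E. integral_mf_is p \<Gamma> L I \<longrightarrow> p_integral_mf_is p \<Gamma> Ls J
          \<longrightarrow> E \<in> sets (lebesgue_on {0..1}) \<longrightarrow> I E = J E)"
proof -
  interpret ck_multifunction p \<Gamma>
    using assms by unfold_locales auto
  show ?thesis
    using integrable_imp_p_integrable p_integrable_imp_integrable integral_eq_p_integral by blast
qed

end
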